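(* Let $(w_n)_{n\ge0}$ be nonnegative reals with $W(z)=\sum_{n\ge0}w_nz^n$, and assume there are $\rho_w>0$ and a slowly varying $L_w$ with $w_n\sim L_w(n)n^{-1}\rho_w^{-n}$ and $W(\rho_w)\in(0,\infty)$. Let $X_1,X_2,\dots$ be i.i.d. with probability generating function $W(\rho_w z)/W(\rho_w)$ and $S_k=X_1+\dots+X_k$. For each $n\ge1$ let $k=k(n)$ be a positive integer such that $k\,L_w(n)\to0$. Then, as $n\to\infty$, $$d_{\mathrm{TV}}\Big(\mathcal{L}\big(\tau(X_1,\dots,X_k)\,\big|\,S_k=n\big),\ \mathcal{L}\big((X_1,\dots,X_{k-1})\,\big|\,X_i\le n\ \forall i\le k-1\big)\Big)\to0.$$ Consequently, conditionally on $S_k=n$, $\max(X_1,\dots,X_k)/n\to1$ in probability.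
   Context: The "delete first maximum" operator $\tau$ maps $(x_1,\dots,x_k)\in\mathbb{N}_0^k$ to $(x_1,\dots,x_{J-1},x_{J+1},\dots,x_k)\in\mathbb{N}_0^{k-1}$ where $J=\min\{j:x_j=\max_i x_i\}$. $d_{\mathrm{TV}}$ is total variation distance between laws on $\mathbb{N}_0^{k-1}$. *)

theory Defs
  imports "HOL-Analysis.Analysis" "HOL-Library.Landau_Symbols"
begin

definition slowly_varying :: "(real \<Rightarrow> real) \<Rightarrow> bool" where
  "slowly_varying L \<longleftrightarrow> L \<in> borel_measurable borel \<and>
     eventually (\<lambda>x. L x > 0) at_top \<and>
     (\<forall>c>0. ((\<lambda>x. L (c * x) / L x) \<longlongrightarrow> 1) at_top)"

text \<open>Delete-first-maximum operator on tuples, represented as lists.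
  remove1 removes the first occurrence, i.e. the entry at index J.\<close>
definition tau :: "nat list \<Rightarrow> nat list" where
  "tau xs = remove1 (Max (set xs)) xs"

text \<open>Probability mass function of X_i: P(X = j) = w_j rho^j / W(rho),
  i.e. the law with pgf W(rho z)/W(rho).\<close>
definition step_prob :: "(nat \<Rightarrow> real) \<Rightarrow> real \<Rightarrow> nat \<Rightarrow> real" where
  "step_prob w \<rho> j = w j * \<rho> ^ j / (\<Sum>i. w i * \<rho> ^ i)"

definition list_prob :: "(nat \<Rightarrow> real) \<Rightarrow> nat list \<Rightarrow> real" where
  "list_prob p xs = prod_list (map p xs)"

definition cond_tau_law :: "(nat \<Rightarrow> real) \<Rightarrow> nat \<Rightarrow> nat \<Rightarrow> nat list \<Rightarrow> real" where
  "cond_tau_law p k n ys =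
     (\<Sum>xs | length xs = k \<and> sum_list xs = n \<and> tau xs = ys. list_prob p xs) /
     (\<Sum>xs | length xs = k \<and> sum_list xs = n. list_prob p xs)"

definition trunc_law :: "(nat \<Rightarrow> real) \<Rightarrow> nat \<Rightarrow> nat \<Rightarrow> nat list \<Rightarrow> real" where
  "trunc_law p k n ys =
     (if length ys = k - 1 \<and> (\<forall>y\<in>set ys. y \<le> n)
      then list_prob p ys /
           (\<Sum>zs | length zs = k - 1 \<and> (\<forall>z\<in>set zs. z \<le> n). list_prob p zs)
      else 0)"

definition tv_dist :: "(nat list \<Rightarrow> real) \<Rightarrow> (nat list \<Rightarrow> real) \<Rightarrow> real" where
  "tv_dist f g = (1/2) * infsum (\<lambda>ys. \<bar>f ys - g ys\<bar>) UNIV"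

definition cond_max_dev :: "(nat \<Rightarrow> real) \<Rightarrow> nat \<Rightarrow> nat \<Rightarrow> real \<Rightarrow> real" where
  "cond_max_dev p k n \<epsilon> =
     (\<Sum>xs | length xs = k \<and> sum_list xs = n \<and>
              \<bar>real (Max (set xs)) / real n - 1\<bar> > \<epsilon>. list_prob p xs) /
     (\<Sum>xs | length xs = k \<and> sum_list xs = n. list_prob p xs)"

end

theory Submission
  imports Defs
begin

text \<open>Let \<open>p\<close> be the law of \<open>X\<^sub>i\<close> and \<open>Q\<close> the product law, so that \<open>n p(n) \<sim> L(n) / W(\<rho>)\<close>.
  Given \<open>S\<^sub>k = n\<close>, a tuple is recovered from \<open>ys = \<tau>(X\<^sub>1, \<dots>, X\<^sub>k)\<close> by reinserting its maximum
  \<open>m = n - sum ys\<close> at one of at most \<open>k\<close> positions, and at exactly \<open>k\<close> positions when every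
  entry of \<open>ys\<close> is below \<open>m\<close>; so the conditional weight of \<open>ys\<close> is about \<open>k p(m) Q(ys)\<close>.
  Since \<open>k L(n) \<rightarrow> 0\<close>, a Chernoff bound gives \<open>sum ys \<le> x n\<close> outside \<open>Q\<close>-mass \<open>r \<rightarrow> 0\<close>;
  there \<open>p(m) \<approx> p(n)\<close> because \<open>L\<close> is slowly varying, while the remaining \<open>ys\<close> are controlled
  by a dyadic decomposition and the Potter-type bound \<open>p(m) \<le> C (n/m)\<^sup>2 p(n)\<close>. Hence the
  conditional law of \<open>\<tau>\<close> is within \<open>O(x + r)\<close> of \<open>Q\<close> truncated at \<open>n\<close>, and the maximum
  \<open>n - sum ys\<close> exceeds \<open>(1 - x) n\<close> with high probability.\<close>

section \<open>Chernoff bounds for sums of independent weights\<close>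

lemma sum_prod_list_lists_length_eq_power:
  fixes f :: "'a \<Rightarrow> 'b::comm_semiring_1"
  shows "(\<Sum>xs | set xs \<subseteq> A \<and> length xs = K. prod_list (map f xs)) = (\<Sum>a\<in>A. f a) ^ K"
proof (induction K)
  case 0
  have "{xs. set xs \<subseteq> A \<and> length xs = 0} = {[]}" by auto
  then show ?case by simp
next
  case (Suc K)
  let ?L = "{xs. set xs \<subseteq> A \<and> length xs = K}"
  have inj: "inj_on (\<lambda>(xs, a). a # xs) (?L \<times> A)" by (auto simp: inj_on_def)
  have "(\<Sum>xs | set xs \<subseteq> A \<and> length xs = Suc K. prod_list (map f xs))
      = (\<Sum>(xs, a)\<in>?L \<times> A. f a * prod_list (map f xs))"
    unfolding lists_length_Suc_eq by (subst sum.reindex[OF inj]) (simp add: case_prod_unfold)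
  also have "\<dots> = (\<Sum>xs\<in>?L. (\<Sum>a\<in>A. f a) * prod_list (map f xs))"
    by (simp add: sum.cartesian_product[symmetric] sum_distrib_right)
  also have "\<dots> = (\<Sum>a\<in>A. f a) ^ Suc K"
    using Suc by (simp add: sum_distrib_left[symmetric])
  finally show ?case .
qed

lemma chernoff_bound_lists_exp:
  fixes f :: "nat \<Rightarrow> real" and l s :: real
  assumes f: "\<And>j. f j \<ge> 0" and l: "l \<ge> 0"
  shows "(\<Sum>xs | set xs \<subseteq> {..y} \<and> length xs = K \<and> s \<le> real (sum_list xs). prod_list (map f xs))
     \<le> exp (- l * s) * (\<Sum>j\<le>y. f j * exp (l * real j)) ^ K"
proof -
  let ?L = "{xs. set xs \<subseteq> {..y} \<and> length xs = K}"
  let ?Ls = "{xs. set xs \<subseteq> {..y} \<and> length xs = K \<and> s \<le> real (sum_list xs)}"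
  have fin: "finite ?L" by (rule finite_lists_length_eq) simp
  have pos: "prod_list (map f xs) \<ge> 0" for xs using f by (induction xs) auto
  have tilt: "prod_list (map f xs) * exp (l * real (sum_list xs))
      = prod_list (map (\<lambda>j. f j * exp (l * real j)) xs)" for xs
    by (induction xs) (auto simp: exp_add distrib_left algebra_simps)
  have "(\<Sum>xs\<in>?Ls. prod_list (map f xs))
      \<le> (\<Sum>xs\<in>?Ls. prod_list (map f xs) * exp (l * (real (sum_list xs) - s)))"
    using l by (intro sum_mono) (simp add: mult_le_cancel_left1 leD[OF pos])
  also have "\<dots> \<le> (\<Sum>xs\<in>?L. prod_list (map f xs) * exp (l * (real (sum_list xs) - s)))"
    by (rule sum_mono2[OF fin]) (auto intro: pos mult_nonneg_nonneg)
  also have "\<dots> = exp (- l * s) * (\<Sum>xs\<in>?L. prod_list (map f xs) * exp (l * real (sum_list xs)))"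
    by (simp add: sum_distrib_left right_diff_distrib exp_diff exp_minus field_simps)
  also have "\<dots> = exp (- l * s) * (\<Sum>j\<le>y. f j * exp (l * real j)) ^ K"
    by (simp add: tilt sum_prod_list_lists_length_eq_power)
  finally show ?thesis .
qed

lemma truncated_mgf_le:
  fixes p :: "nat \<Rightarrow> real" and l :: real
  assumes p: "\<And>j. p j \<ge> 0" and l: "l \<ge> 0"
  shows "(\<Sum>j\<le>y. p j * exp (l * real j))
     \<le> (\<Sum>j\<le>y. p j) + l * exp (l * real y) * (\<Sum>j\<le>y. real j * p j)"
proof -
  have "p j * exp (l * real j) \<le> p j + l * exp (l * real y) * (real j * p j)" if "j \<le> y" for j
  proof -
    define t where "t = l * real j"
    have t: "0 \<le> t" "exp t \<le> exp (l * real y)"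
      using l that unfolding t_def by (auto intro: mult_left_mono)
    \<comment> \<open>\<open>exp t \<le> 1 + t exp t\<close> is \<open>exp (- t) \<ge> 1 - t\<close> multiplied by \<open>exp t\<close>\<close>
    have "(1 - t) * exp t \<le> exp (- t) * exp t"
      using exp_ge_add_one_self[of "- t"] by (intro mult_right_mono) auto
    then have "exp t \<le> 1 + t * exp t" by (simp add: exp_minus field_simps)
    also have "\<dots> \<le> 1 + t * exp (l * real y)" using t by (intro add_left_mono mult_left_mono) auto
    finally have "p j * exp t \<le> p j * (1 + t * exp (l * real y))"
      using p[of j] by (rule mult_left_mono)
    then show ?thesis unfolding t_def by (simp add: algebra_simps)
  qed
  then have "(\<Sum>j\<le>y. p j * exp (l * real j)) \<le> (\<Sum>j\<le>y. p j + l * exp (l * real y) * (real j * p j))"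
    by (intro sum_mono) auto
  then show ?thesis by (simp add: sum.distrib sum_distrib_left)
qed

lemma chernoff_bound_lists:
  fixes p :: "nat \<Rightarrow> real" and s P \<mu> :: real
  assumes p: "\<And>j. p j \<ge> 0" and y: "y \<ge> 1" and s: "s > 0"
    and P: "(\<Sum>j\<le>y. p j) \<le> P" "P > 0" and \<mu>: "(\<Sum>j\<le>y. real j * p j) \<le> \<mu>" "\<mu> > 0"
    and \<theta>_le_1: "2 * real K * \<mu> / (s * P) \<le> 1"
  shows "(\<Sum>xs | set xs \<subseteq> {..y} \<and> length xs = K \<and> s \<le> real (sum_list xs). prod_list (map p xs))
     \<le> P ^ K * (2 * real K * \<mu> / (s * P)) powr (s / (2 * real y))"
proof (cases "K = 0")
  case True
  then have no_lists: "{xs. set xs \<subseteq> {..y} \<and> length xs = K \<and> s \<le> real (sum_list xs)} = {}"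
    using s by auto
  show ?thesis unfolding no_lists using P by simp
next
  case False
  define \<theta> where "\<theta> = 2 * real K * \<mu> / (s * P)"
  have \<theta>: "0 < \<theta>" "\<theta> \<le> 1" using False s P \<mu> \<theta>_le_1 unfolding \<theta>_def by auto
  \<comment> \<open>the tilt \<open>l\<close> makes \<open>exp (l y) = 1 / \<theta>\<close>\<close>
  define l where "l = - ln \<theta> / real y"
  have l: "l \<ge> 0" "exp (l * real y) = 1 / \<theta>"
    using \<theta> y unfolding l_def by (auto simp: exp_minus field_simps)
  have "(\<Sum>j\<le>y. p j * exp (l * real j)) \<le> P + l / \<theta> * \<mu>"
  proof -
    have "l * exp (l * real y) * (\<Sum>j\<le>y. real j * p j) \<le> l / \<theta> * \<mu>"
      using \<mu> l \<theta> by (simp add: divide_right_mono mult_left_mono)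
    then show ?thesis using truncated_mgf_le[of p l y, OF p l(1)] P by linarith
  qed
  also have "\<dots> = P * (1 + l * \<mu> / (\<theta> * P))" using P \<theta> by (simp add: field_simps)
  also have "\<dots> \<le> P * exp (l * \<mu> / (\<theta> * P))"
    using P by (intro mult_left_mono exp_ge_add_one_self) auto
  finally have mgf: "(\<Sum>j\<le>y. p j * exp (l * real j)) \<le> P * exp (l * \<mu> / (\<theta> * P))" .
  have "(\<Sum>xs | set xs \<subseteq> {..y} \<and> length xs = K \<and> s \<le> real (sum_list xs). prod_list (map p xs))
     \<le> exp (- l * s) * (\<Sum>j\<le>y. p j * exp (l * real j)) ^ K"
    by (rule chernoff_bound_lists_exp[OF p l(1)])
  also have "\<dots> \<le> exp (- l * s) * (P * exp (l * \<mu> / (\<theta> * P))) ^ K"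
    using mgf p by (intro mult_left_mono power_mono sum_nonneg) auto
  also have "\<dots> = P ^ K * exp (l * (real K * \<mu> / (\<theta> * P) - s))"
    by (simp add: power_mult_distrib exp_of_nat_mult[symmetric] mult_exp_exp right_diff_distrib)
  also have "real K * \<mu> / (\<theta> * P) = s / 2"
    using False s P \<mu> unfolding \<theta>_def by (simp add: field_simps)
  also have "exp (l * (s / 2 - s)) = \<theta> powr (s / (2 * real y))"
    using \<theta> y unfolding l_def by (simp add: powr_def field_simps)
  finally show ?thesis unfolding \<theta>_def .
qed

section \<open>Slowly varying functions: uniform convergence and Potter bounds\<close>

lemma slowly_varying_eventually_pos:
  assumes "slowly_varying L"
  obtains X where "\<And>t. t \<ge> X \<Longrightarrow> L t > 0"
  using assms unfolding slowly_varying_def eventually_at_top_linorder by auto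

lemma slowly_varying_ratio_tendsto:
  assumes "slowly_varying L" "c > 0" "filterlim x at_top F"
  shows "((\<lambda>n. L (c * x n) / L (x n)) \<longlongrightarrow> 1) F"
proof -
  have "((\<lambda>t. L (c * t) / L t) \<longlongrightarrow> 1) at_top" using assms(1,2) unfolding slowly_varying_def by auto
  from filterlim_compose[OF this assms(3)] show ?thesis by (simp add: comp_def)
qed

definition ratio_deviation :: "(real \<Rightarrow> real) \<Rightarrow> real \<Rightarrow> real \<Rightarrow> real \<Rightarrow> real" where
  "ratio_deviation L \<eta> x c = (if \<eta> \<le> \<bar>L (c * x) / L x - 1\<bar> then 1 else 0)"

lemma ratio_deviation_measurable [measurable]:
  assumes [measurable]: "L \<in> borel_measurable borel"
  shows "ratio_deviation L \<eta> x \<in> borel_measurable borel"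
  unfolding ratio_deviation_def by measurable

lemma ratio_deviation_bounds: "0 \<le> ratio_deviation L \<eta> x c \<and> ratio_deviation L \<eta> x c \<le> 1"
  by (simp add: ratio_deviation_def)

lemma integrable_indicator_Icc: "integrable lborel (indicator {a..b::real} :: real \<Rightarrow> real)"
  by (simp add: integrable_indicator_iff emeasure_lborel_Icc_eq)

lemma slowly_varying_deviation_integral_tendsto_0:
  assumes sv: "slowly_varying L" and x: "filterlim x at_top sequentially" and "a > 0" "\<eta> > 0"
  shows "(\<lambda>n. LINT c|lborel. indicator {a..b} c * ratio_deviation L \<eta> (x n) c) \<longlonglongrightarrow> 0"
proof -
  have [measurable]: "L \<in> borel_measurable borel" using sv unfolding slowly_varying_def by auto
  have pointwise: "(\<lambda>n. indicator {a..b} c * ratio_deviation L \<eta> (x n) c) \<longlonglongrightarrow> 0" for c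
  proof (cases "c \<in> {a..b}")
    case True
    then have "((\<lambda>n. L (c * x n) / L (x n)) \<longlongrightarrow> 1) sequentially"
      using assms by (intro slowly_varying_ratio_tendsto) auto
    then have "\<forall>\<^sub>F n in sequentially. \<bar>L (c * x n) / L (x n) - 1\<bar> < \<eta>"
      using \<open>\<eta> > 0\<close> by (simp add: tendsto_iff dist_real_def)
    then have "\<forall>\<^sub>F n in sequentially. indicator {a..b} c * ratio_deviation L \<eta> (x n) c = 0"
      by eventually_elim (simp add: ratio_deviation_def)
    then show ?thesis by (rule tendsto_eventually)
  qed simp
  have "(\<lambda>n. LINT c|lborel. indicator {a..b} c * ratio_deviation L \<eta> (x n) c)
      \<longlonglongrightarrow> integral\<^sup>L lborel (\<lambda>c::real. 0::real)"
  proof (rule integral_dominated_convergence[where w="indicator {a..b}" and f="\<lambda>c. 0"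
        and s="\<lambda>n c. indicator {a..b} c * ratio_deviation L \<eta> (x n) c"])
    show "AE c in lborel. (\<lambda>n. indicator {a..b} c * ratio_deviation L \<eta> (x n) c) \<longlonglongrightarrow> 0"
      using pointwise by simp
  qed (auto simp: integrable_indicator_Icc indicator_def ratio_deviation_def)
  then show ?thesis by simp
qed

lemma integrable_indicator_Icc_mult:
  fixes g :: "real \<Rightarrow> real"
  assumes [measurable]: "g \<in> borel_measurable borel" and "\<And>t. 0 \<le> g t \<and> g t \<le> 1"
  shows "integrable lborel (\<lambda>t. indicator {a..b} t * g t)"
  by (rule Bochner_Integration.integrable_bound[OF integrable_indicator_Icc[of a b]])
     (use assms in \<open>auto simp: indicator_def\<close>)

lemma integral_indicator_rescaled_le:
  fixes v :: "real \<Rightarrow> real" and c :: real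
  assumes [measurable]: "v \<in> borel_measurable borel" and v: "\<And>t. 0 \<le> v t \<and> v t \<le> 1"
    and c: "1/2 \<le> c" "c \<le> 1"
  shows "(LINT t|lborel. indicator {1/4..1} t * v (t / c)) \<le> (LINT d|lborel. indicator {1/4..2} d * v d)"
proof -
  define f where "f t = indicator {1/4..1} t * v (t / c)" for t
  have f_int: "integrable lborel f"
    unfolding f_def using v by (intro integrable_indicator_Icc_mult) auto
  \<comment> \<open>the substitution \<open>t = c d\<close> maps \<open>[1/4, 1]\<close> into \<open>c [1/4, 2]\<close>\<close>
  have f_scaled: "f (0 + c * d) \<le> indicator {1/4..2} d * v d" for d
  proof (cases "c * d \<in> {1/4..1}")
    case True
    have "d = (c * d) / c" using c by simp
    moreover have "(1/4) / 1 \<le> (c * d) / c" "(c * d) / c \<le> 1 / (1/2)"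
      using True c by (intro frac_le; simp)+
    ultimately have "d \<in> {1/4..2}" by simp
    then show ?thesis using True c by (simp add: f_def)
  qed (use v in \<open>simp add: f_def\<close>)
  have "(LINT t|lborel. f t) = c * (LINT d|lborel. f (0 + c * d))"
    using lborel_integral_real_affine[of c f 0] c by simp
  also have "\<dots> \<le> (LINT d|lborel. f (0 + c * d))"
    using c v by (intro mult_left_le_one_le integral_nonneg_AE AE_I2) (auto simp: f_def)
  also have "\<dots> \<le> (LINT d|lborel. indicator {1/4..2} d * v d)"
    using c f_int integrable_indicator_Icc_mult[OF assms(1) v]
    by (intro integral_mono f_scaled lborel_integrable_real_affine) auto
  finally show ?thesis unfolding f_def .
qed

lemma exists_point_avoiding_small_sets:
  fixes u v :: "real \<Rightarrow> real" and c :: real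
  assumes [measurable]: "u \<in> borel_measurable borel" "v \<in> borel_measurable borel"
    and u: "\<And>t. 0 \<le> u t \<and> u t \<le> 1" and v: "\<And>t. 0 \<le> v t \<and> v t \<le> 1"
    and small_u: "(LINT t|lborel. indicator {1/4..1} t * u t) < 1/4"
    and small_v: "(LINT t|lborel. indicator {1/4..2} t * v t) < 1/4"
    and c: "1/2 \<le> c" "c \<le> 1"
  shows "\<exists>t\<in>{1/4..1}. u t + v (t / c) < 1"
proof (rule ccontr)
  assume "\<not> ?thesis"
  then have cover: "indicator {1/4..1} t \<le> indicator {1/4..1} t * u t + indicator {1/4..1} t * v (t / c)" for t
    by (cases "t \<in> {1/4..1}") (auto simp: not_less u v)
  have u_int: "integrable lborel (\<lambda>t. indicator {1/4..1} t * u t)"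
    by (rule integrable_indicator_Icc_mult[OF assms(1) u])
  have v_int: "integrable lborel (\<lambda>t. indicator {1/4..1} t * v (t / c))"
    using v by (intro integrable_indicator_Icc_mult) auto
  have "(LINT t|lborel. indicator {1/4..1::real} t :: real)
      \<le> (LINT t|lborel. indicator {1/4..1} t * u t + indicator {1/4..1} t * v (t / c))"
    using cover u_int v_int by (intro integral_mono integrable_indicator_Icc Bochner_Integration.integrable_add)
  also have "\<dots> = (LINT t|lborel. indicator {1/4..1} t * u t) + (LINT t|lborel. indicator {1/4..1} t * v (t / c))"
    using u_int v_int by (rule Bochner_Integration.integral_add)
  also have "\<dots> < 1/4 + 1/4"
    using small_u small_v integral_indicator_rescaled_le[OF assms(2) v c] by linarith
  finally show False by simp
qed

lemma ratio_near_one_via_common_value: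
  fixes a b e \<epsilon> :: real
  assumes "a > 0" "b > 0" "e > 0" "\<epsilon> > 0"
    and ea: "\<bar>e / a - 1\<bar> < \<epsilon> / (3 + \<epsilon>)" and eb: "\<bar>e / b - 1\<bar> < \<epsilon> / (3 + \<epsilon>)"
  shows "\<bar>b / a - 1\<bar> \<le> \<epsilon>"
proof -
  define \<eta> where "\<eta> = \<epsilon> / (3 + \<epsilon>)"
  have \<eta>: "0 < \<eta>" "\<eta> < 1" "2 * \<eta> / (1 - \<eta>) = 2 * \<epsilon> / 3"
    using \<open>\<epsilon> > 0\<close> unfolding \<eta>_def by (auto simp: field_simps)
  have "b / a - 1 = (e / a - e / b) / (e / b)" using assms(1-3) by (simp add: field_simps)
  then have "\<bar>b / a - 1\<bar> = \<bar>e / a - e / b\<bar> / (e / b)" using assms(2,3) by (simp add: abs_mult)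
  also have "\<dots> \<le> 2 * \<eta> / (1 - \<eta>)"
    using ea eb \<eta> unfolding \<eta>_def[symmetric] by (intro frac_le) auto
  finally show ?thesis using \<eta> \<open>\<epsilon> > 0\<close> by simp
qed

text \<open>If the deviation sets at \<open>a\<close> and at \<open>c a\<close> both have measure below \<open>1/4\<close>, some
  \<open>t\<close> is good for both and \<open>L (c a) / L a\<close> is compared through \<open>L (t a)\<close>. This argument of
  Korevaar, van Aardenne-Ehrenfest and de Bruijn needs nothing of \<open>L\<close> beyond measurability.\<close>
lemma ratio_near_one_if_deviations_small:
  assumes L_meas: "L \<in> borel_measurable borel" and pos: "\<And>t. t \<ge> X \<Longrightarrow> L t > 0"
    and a: "a \<ge> 4 * max X 0" and c: "c \<in> {1/2..1}" and \<epsilon>: "\<epsilon> > 0"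
    and small_a: "(LINT t|lborel. indicator {1/4..1} t * ratio_deviation L (\<epsilon> / (3 + \<epsilon>)) a t) < 1/4"
    and small_ca: "(LINT t|lborel. indicator {1/4..2} t * ratio_deviation L (\<epsilon> / (3 + \<epsilon>)) (c * a) t) < 1/4"
  shows "\<bar>L (c * a) / L a - 1\<bar> \<le> \<epsilon>"
proof -
  let ?\<eta> = "\<epsilon> / (3 + \<epsilon>)"
  have "\<exists>t\<in>{1/4..1}. ratio_deviation L ?\<eta> a t + ratio_deviation L ?\<eta> (c * a) (t / c) < 1"
    using c by (intro exists_point_avoiding_small_sets[OF ratio_deviation_measurable[OF L_meas]
          ratio_deviation_measurable[OF L_meas] ratio_deviation_bounds ratio_deviation_bounds
          small_a small_ca]) auto
  then obtain t where t: "t \<in> {1/4..1}"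
    and good: "ratio_deviation L ?\<eta> a t + ratio_deviation L ?\<eta> (c * a) (t / c) < 1"
    by blast
  have "c > 0" using c by auto
  then have "t / c * (c * a) = t * a" by simp
  then have close: "\<bar>L (t * a) / L a - 1\<bar> < ?\<eta>" "\<bar>L (t * a) / L (c * a) - 1\<bar> < ?\<eta>"
    using good by (auto simp: ratio_deviation_def split: if_splits)
  have "1/4 * a \<le> t * a" "1/2 * a \<le> c * a"
    using t c a by (intro mult_right_mono; auto)+
  then have "X \<le> t * a" "X \<le> c * a" "X \<le> a" using a by auto
  then show ?thesis
    using close \<epsilon> by (intro ratio_near_one_via_common_value[where e="L (t * a)"] pos) auto
qed

lemma slowly_varying_ratio_eventually_close:
  assumes sv: "slowly_varying L" and x_lim: "filterlim x at_top sequentially"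
    and c: "\<And>n. c n \<in> {1/2..1}" and \<epsilon>: "\<epsilon> > 0"
  shows "\<forall>\<^sub>F n in sequentially. \<bar>L (c n * x n) / L (x n) - 1\<bar> \<le> \<epsilon>"
proof -
  have L_meas: "L \<in> borel_measurable borel" using sv unfolding slowly_varying_def by auto
  obtain X where X: "\<And>t. t \<ge> X \<Longrightarrow> L t > 0" using slowly_varying_eventually_pos[OF sv] by blast
  have "\<forall>\<^sub>F n in sequentially. 0 \<le> x n"
    using x_lim unfolding filterlim_at_top by blast
  then have "\<forall>\<^sub>F n in sequentially. 1/2 * x n \<le> c n * x n"
    by eventually_elim (rule mult_right_mono; use c in auto)
  moreover have "filterlim (\<lambda>n. 1/2 * x n) at_top sequentially"
    by (rule filterlim_tendsto_pos_mult_at_top[OF tendsto_const _ x_lim]) simp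
  ultimately have y_lim: "filterlim (\<lambda>n. c n * x n) at_top sequentially"
    by (rule filterlim_at_top_mono[rotated])
  let ?\<eta> = "\<epsilon> / (3 + \<epsilon>)"
  have "(\<lambda>n. LINT t|lborel. indicator {1/4..1} t * ratio_deviation L ?\<eta> (x n) t) \<longlonglongrightarrow> 0"
    "(\<lambda>n. LINT t|lborel. indicator {1/4..2} t * ratio_deviation L ?\<eta> (c n * x n) t) \<longlonglongrightarrow> 0"
    using \<epsilon> by (intro slowly_varying_deviation_integral_tendsto_0[OF sv] x_lim y_lim; simp)+
  then have "\<forall>\<^sub>F n in sequentially.
      (LINT t|lborel. indicator {1/4..1} t * ratio_deviation L ?\<eta> (x n) t) < 1/4 \<and>
      (LINT t|lborel. indicator {1/4..2} t * ratio_deviation L ?\<eta> (c n * x n) t) < 1/4 \<and>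
      x n \<ge> 4 * max X 0"
    using x_lim unfolding filterlim_at_top by (intro eventually_conj order_tendstoD(2)) auto
  then show ?thesis
    by eventually_elim (use ratio_near_one_if_deviations_small[OF L_meas X _ c \<epsilon>] in blast)
qed

lemma slowly_varying_uniform:
  assumes sv: "slowly_varying L" and \<epsilon>: "\<epsilon> > 0"
  obtains X where "\<And>x c. x \<ge> X \<Longrightarrow> c \<in> {1/2..1} \<Longrightarrow> \<bar>L (c * x) / L x - 1\<bar> \<le> \<epsilon>"
proof -
  have "\<exists>X. \<forall>x\<ge>X. \<forall>c\<in>{1/2..1}. \<bar>L (c * x) / L x - 1\<bar> \<le> \<epsilon>"
  proof (rule ccontr)
    assume "\<not> ?thesis"
    then have "\<forall>X. \<exists>x\<ge>X. \<exists>c\<in>{1/2..1}. \<bar>L (c * x) / L x - 1\<bar> > \<epsilon>"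
      by (simp add: not_le)
    then have "\<forall>n::nat. \<exists>x c. x \<ge> real n \<and> c \<in> {1/2..1} \<and> \<bar>L (c * x) / L x - 1\<bar> > \<epsilon>"
      by blast
    then obtain x c where xc: "\<forall>n. x n \<ge> real n \<and> c n \<in> {1/2..1} \<and> \<bar>L (c n * x n) / L (x n) - 1\<bar> > \<epsilon>"
      by (metis choice)
    have "filterlim x at_top sequentially"
      by (rule filterlim_at_top_mono[OF filterlim_real_sequentially]) (use xc in auto)
    from slowly_varying_ratio_eventually_close[OF sv this _ \<epsilon>, of c]
    have "\<forall>\<^sub>F n in sequentially. \<bar>L (c n * x n) / L (x n) - 1\<bar> \<le> \<epsilon>" using xc by blast
    then have "\<forall>\<^sub>F n in sequentially. False" by eventually_elim (use xc in \<open>auto simp: not_le[symmetric]\<close>)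
    then show False by simp
  qed
  then show ?thesis using that by blast
qed

lemma doubling_bound_iterate:
  fixes g :: "real \<Rightarrow> real"
  assumes X: "X > 0" and pos: "\<And>t. t \<ge> X \<Longrightarrow> g t > 0"
    and doubling: "\<And>x y. X \<le> y \<Longrightarrow> y \<le> x \<Longrightarrow> x \<le> 2 * y \<Longrightarrow> g y \<le> sqrt 2 * g x"
    and y: "X \<le> y"
  shows "y \<le> x \<Longrightarrow> x \<le> 2 ^ j * y \<Longrightarrow> g y \<le> sqrt 2 ^ j * g x"
proof (induction j arbitrary: x)
  case (Suc j)
  show ?case
  proof (cases "x \<le> 2 * y")
    case True
    have "g y \<le> sqrt 2 * g x" using doubling[OF y Suc.prems(1) True] .
    also have "\<dots> \<le> sqrt 2 ^ Suc j * g x"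
      using pos[of x] y Suc.prems(1) power_increasing[of 1 "Suc j" "sqrt 2"]
      by (intro mult_right_mono) auto
    finally show ?thesis .
  next
    case False
    then have "g y \<le> sqrt 2 ^ j * g (x / 2)" using Suc.prems by (intro Suc.IH) auto
    also have "\<dots> \<le> sqrt 2 ^ j * (sqrt 2 * g x)"
      using False y X by (intro mult_left_mono doubling) auto
    also have "\<dots> = sqrt 2 ^ Suc j * g x" by simp
    finally show ?thesis .
  qed
qed simp

lemma potter_bound_of_doubling:
  fixes g :: "real \<Rightarrow> real"
  assumes X: "X > 0" and pos: "\<And>t. t \<ge> X \<Longrightarrow> g t > 0"
    and doubling: "\<And>x y. X \<le> y \<Longrightarrow> y \<le> x \<Longrightarrow> x \<le> 2 * y \<Longrightarrow> g y \<le> sqrt 2 * g x"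
    and y: "X \<le> y" and "y \<le> x"
  shows "g y \<le> sqrt 2 * sqrt (x / y) * g x"
proof -
  have y0: "y > 0" using X y by linarith
  define t where "t = nat \<lfloor>x / y\<rfloor>"
  have t: "real t \<le> x / y" "x / y < real t + 1" "t \<ge> 1"
    using \<open>y \<le> x\<close> y0 unfolding t_def by (auto simp: le_nat_floor)
  obtain j where j: "2 ^ j \<le> t" "t < 2 ^ Suc j" using ex_power_ivl1[of 2 t] t(3) by auto
  have "t + 1 \<le> 2 ^ Suc j" using j(2) by simp
  then have "real (t + 1) \<le> real (2 ^ Suc j)" by (simp only: of_nat_le_iff)
  then have "(real t + 1) * y \<le> 2 ^ Suc j * y" using y0 by (intro mult_right_mono) auto
  moreover have "x < (real t + 1) * y" using t(2) y0 by (simp add: divide_less_eq)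
  ultimately have "g y \<le> sqrt 2 ^ Suc j * g x"
    using doubling_bound_iterate[of X g y x "Suc j", OF X pos doubling y \<open>y \<le> x\<close>] by simp
  also have "sqrt 2 ^ Suc j = sqrt 2 * sqrt (2 ^ j)" by (simp add: real_sqrt_power)
  also have "real (2 ^ j) \<le> real t" using j(1) by (simp only: of_nat_le_iff)
  from order_trans[OF this t(1)] have "sqrt (2 ^ j) \<le> sqrt (x / y)" by simp
  then have "sqrt 2 * sqrt (2 ^ j) * g x \<le> sqrt 2 * sqrt (x / y) * g x"
    using pos[of x] y \<open>y \<le> x\<close> by (intro mult_right_mono mult_left_mono) auto
  finally show ?thesis .
qed

lemma slowly_varying_potter:
  assumes sv: "slowly_varying L"
  obtains X where "X > 0" "\<And>t. t \<ge> X \<Longrightarrow> L t > 0"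
    "\<And>x y. X \<le> y \<Longrightarrow> y \<le> x \<Longrightarrow> L y \<le> sqrt 2 * sqrt (x / y) * L x"
proof -
  obtain X0 where X0: "\<And>x c. x \<ge> X0 \<Longrightarrow> c \<in> {1/2..1} \<Longrightarrow> \<bar>L (c * x) / L x - 1\<bar> \<le> sqrt 2 - 1"
    using slowly_varying_uniform[OF sv, of "sqrt 2 - 1"] by auto
  obtain X1 where X1: "\<And>t. t \<ge> X1 \<Longrightarrow> L t > 0" using slowly_varying_eventually_pos[OF sv] by blast
  define X where "X = max (max X0 X1) 1"
  have X: "X > 0" unfolding X_def by auto
  have pos: "L t > 0" if "t \<ge> X" for t using X1 that unfolding X_def by auto
  have doubling: "L y \<le> sqrt 2 * L x" if "X \<le> y" "y \<le> x" "x \<le> 2 * y" for x y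
  proof -
    have "x > 0" "x \<ge> X0" using that unfolding X_def by auto
    moreover have "y / x \<in> {1/2..1}" using that \<open>x > 0\<close> by (auto simp: field_simps)
    ultimately have "L y / L x \<le> sqrt 2" using X0[of x "y / x"] by auto
    then show ?thesis using pos[of x] that by (simp add: divide_le_eq)
  qed
  show ?thesis
    by (rule that[OF X pos potter_bound_of_doubling[OF X pos doubling]])
qed

section \<open>Deleting the first maximum\<close>

definition insert_at :: "nat \<Rightarrow> 'a \<Rightarrow> 'a list \<Rightarrow> 'a list" where
  "insert_at J m ys = take J ys @ m # drop J ys"

lemma length_insert_at: "J \<le> length ys \<Longrightarrow> length (insert_at J m ys) = Suc (length ys)"
  unfolding insert_at_def by simp

lemma set_insert_at: "set (insert_at J m ys) = insert m (set ys)"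
proof -
  have "set ys = set (take J ys) \<union> set (drop J ys)" by (metis append_take_drop_id set_append)
  then show ?thesis unfolding insert_at_def by auto
qed

lemma sum_list_insert_at:
  fixes ys :: "'a::comm_monoid_add list"
  shows "sum_list (insert_at J m ys) = m + sum_list ys"
proof -
  have "sum_list ys = sum_list (take J ys) + sum_list (drop J ys)"
    by (metis append_take_drop_id sum_list_append)
  then show ?thesis unfolding insert_at_def by (simp add: add_ac)
qed

lemma list_prob_nonneg: "(\<And>j. p j \<ge> 0) \<Longrightarrow> list_prob p xs \<ge> 0"
  unfolding list_prob_def by (induction xs) auto

lemma list_prob_insert_at: "list_prob p (insert_at J m ys) = p m * list_prob p ys"
proof -
  have "list_prob p ys = list_prob p (take J ys) * list_prob p (drop J ys)"
    unfolding list_prob_def by (metis append_take_drop_id map_append prod_list.append)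
  then show ?thesis unfolding insert_at_def list_prob_def by simp
qed

definition tau_fibre :: "nat \<Rightarrow> nat \<Rightarrow> nat list \<Rightarrow> nat list set" where
  "tau_fibre k n ys = {xs. length xs = k \<and> sum_list xs = n \<and> tau xs = ys}"

lemma finite_lists_length_sum: "finite {xs :: nat list. length xs = k \<and> sum_list xs = n}"
  by (rule finite_subset[OF _ finite_lists_length_eq[of "{..n}" k]])
     (auto simp: member_le_sum_list)

lemma tau_fibre_memD:
  assumes "xs \<in> tau_fibre k n ys" "k \<ge> 1"
  shows "length ys = k - 1" "sum_list ys \<le> n" "\<forall>y\<in>set ys. y \<le> n - sum_list ys"
    "Max (set xs) = n - sum_list ys" "\<exists>J<k. xs = insert_at J (n - sum_list ys) ys"
proof -
  have xs: "length xs = k" "sum_list xs = n" "tau xs = ys" using assms(1) by (auto simp: tau_fibre_def)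
  define M where "M = Max (set xs)"
  have "M \<in> set xs" using xs(1) assms(2) unfolding M_def by (intro Max_in) auto
  then obtain a b where ab: "xs = a @ M # b" "M \<notin> set a" by (metis split_list_first)
  have ys: "ys = a @ b" using xs(3) ab unfolding tau_def M_def[symmetric]
    by (simp add: remove1_append)
  have "y \<le> M" if "y \<in> set ys" for y
    using that unfolding M_def by (intro Max_ge) (auto simp: ys ab(1))
  moreover have M: "M = n - sum_list ys" "sum_list ys \<le> n" using xs(2) ab(1) ys by auto
  moreover have "xs = insert_at (length a) M ys" using ab(1) ys by (simp add: insert_at_def)
  moreover have "length a < k" "length ys = k - 1" using ab(1) ys xs(1) by auto
  ultimately show "length ys = k - 1" "sum_list ys \<le> n" "\<forall>y\<in>set ys. y \<le> n - sum_list ys"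
    "\<exists>J<k. xs = insert_at J (n - sum_list ys) ys"
    by auto
  show "Max (set xs) = n - sum_list ys" using M(1) M_def by simp
qed

lemma tau_fibre_subset:
  "k \<ge> 1 \<Longrightarrow> tau_fibre k n ys \<subseteq> (\<lambda>J. insert_at J (n - sum_list ys) ys) ` {..<k}"
  using tau_fibre_memD(5) by blast

lemma tau_fibre_eq:
  assumes k: "k \<ge> 1" and len: "length ys = k - 1" and sn: "sum_list ys \<le> n"
    and less: "\<forall>y\<in>set ys. y < n - sum_list ys"
  shows "tau_fibre k n ys = (\<lambda>J. insert_at J (n - sum_list ys) ys) ` {..<k}"
    and "inj_on (\<lambda>J. insert_at J (n - sum_list ys) ys) {..<k}"
proof -
  let ?m = "n - sum_list ys"
  have notin: "?m \<notin> set ys" using less by auto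
  have take_while: "takeWhile (\<lambda>y. y \<noteq> ?m) (insert_at J ?m ys) = take J ys" for J
    using notin unfolding insert_at_def by (subst takeWhile_append2) (auto dest: in_set_takeD)
  show "inj_on (\<lambda>J. insert_at J ?m ys) {..<k}"
  proof (rule inj_onI)
    fix J J' assume "J \<in> {..<k}" "J' \<in> {..<k}" "insert_at J ?m ys = insert_at J' ?m ys"
    then have "length (take J ys) = length (take J' ys)" "J \<le> length ys" "J' \<le> length ys"
      using take_while[of J] take_while[of J'] len by auto
    then show "J = J'" by simp
  qed
  have "insert_at J ?m ys \<in> tau_fibre k n ys" if "J < k" for J
  proof -
    have "Max (set (insert_at J ?m ys)) = ?m"
      unfolding set_insert_at using less by (intro Max_eqI) auto
    moreover have "?m \<notin> set (take J ys)" using notin by (auto dest: in_set_takeD)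
    ultimately have "tau (insert_at J ?m ys) = ys"
      unfolding tau_def by (simp add: insert_at_def remove1_append)
    then show ?thesis
      using that k len sn by (simp add: tau_fibre_def length_insert_at sum_list_insert_at)
  qed
  then show "tau_fibre k n ys = (\<lambda>J. insert_at J ?m ys) ` {..<k}"
    using tau_fibre_subset[OF k, of n ys] by blast
qed

lemma sum_tau_fibre_le:
  assumes p: "\<And>j. p j \<ge> 0" and k: "k \<ge> 1"
  shows "(\<Sum>xs\<in>tau_fibre k n ys. list_prob p xs) \<le> real k * p (n - sum_list ys) * list_prob p ys"
proof -
  let ?ins = "\<lambda>J. insert_at J (n - sum_list ys) ys"
  have "(\<Sum>xs\<in>tau_fibre k n ys. list_prob p xs) \<le> sum (list_prob p) (?ins ` {..<k})"
    using tau_fibre_subset[OF k] list_prob_nonneg[OF p] by (intro sum_mono2) auto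
  also have "\<dots> \<le> sum (list_prob p \<circ> ?ins) {..<k}"
    using list_prob_nonneg[OF p] by (intro sum_image_le) auto
  also have "\<dots> = real k * p (n - sum_list ys) * list_prob p ys" by (simp add: list_prob_insert_at)
  finally show ?thesis .
qed

lemma sum_tau_fibre_eq:
  assumes "k \<ge> 1" "length ys = k - 1" "sum_list ys \<le> n" "\<forall>y\<in>set ys. y < n - sum_list ys"
  shows "(\<Sum>xs\<in>tau_fibre k n ys. list_prob p xs) = real k * p (n - sum_list ys) * list_prob p ys"
  by (simp add: tau_fibre_eq[OF assms] sum.reindex list_prob_insert_at)

section \<open>The estimate for a fixed \<open>n\<close>\<close>

lemma tv_dist_eq_one_minus_sum_min:
  assumes "finite S" and f: "\<And>ys. ys \<notin> S \<Longrightarrow> f ys = 0" and g: "\<And>ys. ys \<notin> S \<Longrightarrow> g ys = 0"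
    and "sum f S = 1" "sum g S = 1"
  shows "tv_dist f g = 1 - (\<Sum>ys\<in>S. min (f ys) (g ys))"
proof -
  have "infsum (\<lambda>ys. \<bar>f ys - g ys\<bar>) UNIV = (\<Sum>ys\<in>S. \<bar>f ys - g ys\<bar>)"
    using assms(1) f g by (subst infsum_cong_neutral[where T=S]) auto
  also have "\<dots> = (\<Sum>ys\<in>S. f ys + g ys - 2 * min (f ys) (g ys))"
    by (intro sum.cong) (auto simp: min_def)
  also have "\<dots> = 2 - 2 * (\<Sum>ys\<in>S. min (f ys) (g ys))"
    using assms(4,5) by (simp add: sum_subtractf sum.distrib sum_distrib_left)
  finally show ?thesis unfolding tv_dist_def by simp
qed

lemma powr_le_power_Suc_if_dyadic:
  fixes \<theta> a b :: real
  assumes "0 \<le> \<theta>" "\<theta> \<le> 1" "0 < b" "b * 2 ^ i \<le> a"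
  shows "\<theta> powr a \<le> (\<theta> powr b) ^ Suc i"
proof (cases "\<theta> = 0")
  case False
  have "\<theta> powr a \<le> \<theta> powr (b * 2 ^ i)" using assms by (intro powr_mono') auto
  also have "\<dots> = (\<theta> powr b) ^ (2 ^ i)" using False assms by (simp add: powr_power mult.commute)
  also have "\<dots> \<le> (\<theta> powr b) ^ Suc i"
    using assms by (intro power_decreasing powr_le1) (auto simp: Suc_le_eq less_exp)
  finally show ?thesis .
qed simp

lemma exists_dyadic_scale:
  fixes m n :: nat
  assumes "1 \<le> m" "m \<le> n"
  obtains i where "i \<le> n" "m \<le> n div 2 ^ i" "real n / real m \<le> 2 ^ Suc i"
proof -
  have "n div m \<ge> 1" using assms by (simp add: div_greater_zero_iff Suc_le_eq)
  then obtain i where i: "2 ^ i \<le> n div m" "n div m < 2 ^ Suc i" using ex_power_ivl1[of 2 "n div m"] by auto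
  have "i \<le> n" using less_exp[of i] i(1) div_le_dividend[of n m] by linarith
  moreover have "m \<le> n div 2 ^ i"
    using i(1) assms(1) by (simp add: less_eq_div_iff_mult_less_eq mult.commute)
  moreover have "n < 2 ^ Suc i * m"
    using i(2) assms(1) by (simp add: div_less_iff_less_mult)
  then have "real n < 2 ^ Suc i * real m" by (metis of_nat_less_iff of_nat_mult of_nat_numeral of_nat_power)
  then have "real n / real m \<le> 2 ^ Suc i" using assms(1) by (simp add: divide_le_eq)
  ultimately show ?thesis using that by blast
qed

lemma sum_power_Suc_le:
  fixes q :: real
  assumes "0 \<le> q" "q \<le> 1/2"
  shows "(\<Sum>i\<le>N. q ^ Suc i) \<le> 2 * q"
proof -
  have "(\<Sum>i\<le>N. q ^ i) \<le> (\<Sum>i. q ^ i)"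
    using assms by (intro sum_le_suminf summable_geometric) auto
  also have "\<dots> = 1 / (1 - q)" using assms by (intro suminf_geometric) auto
  also have "\<dots> \<le> 2" using assms by (simp add: divide_le_eq)
  finally have "q * (\<Sum>i\<le>N. q ^ i) \<le> q * 2" using assms(1) by (rule mult_left_mono)
  moreover have "(\<Sum>i\<le>N. q ^ Suc i) = q * (\<Sum>i\<le>N. q ^ i)" by (simp add: sum_distrib_left)
  ultimately show ?thesis by simp
qed

text \<open>\<open>r\<close> is the Chernoff bound for the event that \<open>k - 1\<close> independent copies of \<open>p\<close> truncated
  at \<open>n\<close> sum to at least \<open>x n\<close>.\<close>
locale big_jump_regime =
  fixes p :: "nat \<Rightarrow> real" and n k :: nat and x C r :: real
  assumes p_nonneg: "\<And>j. p j \<ge> 0" and n_pos: "n \<ge> 1" and k_pos: "k \<ge> 1" and p_n_pos: "p n > 0"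
    and x_pos: "0 < x" and x_small: "x \<le> 1/8" and C_nonneg: "C \<ge> 0"
    and p_flat: "\<And>m. (1 - x) * real n \<le> real m \<Longrightarrow> m \<le> n \<Longrightarrow>
      (1 - x) * p n \<le> p m \<and> p m \<le> (1 + x) / (1 - x) * p n"
    and p_poly: "\<And>m. 1 \<le> m \<Longrightarrow> m \<le> n \<Longrightarrow> p m \<le> C * (real n / real m)^2 * p n"
    and r_def: "r = (2 * real (k - 1) * (\<Sum>j\<le>n. real j * p j) / (x * real n * (\<Sum>j\<le>n. p j)))
      powr (x / 2)"
    and r_small: "(8 * C + 1) * r \<le> x"
begin

definition "P = (\<Sum>j\<le>n. p j)"
definition "\<mu> = (\<Sum>j\<le>n. real j * p j)"
definition "\<theta> = 2 * real (k - 1) * \<mu> / (x * real n * P)"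
definition "S = {ys. set ys \<subseteq> {..n} \<and> length ys = k - 1}"
definition "B = {ys \<in> S. real (sum_list ys) \<le> x * real n}"
definition "large i = {ys. set ys \<subseteq> {..n div 2 ^ i} \<and> length ys = k - 1 \<and> x * real n \<le> real (sum_list ys)}"
definition "F ys = (\<Sum>xs\<in>tau_fibre k n ys. list_prob p xs)"
definition "A = (\<Sum>xs | length xs = k \<and> sum_list xs = n. list_prob p xs)"

lemma list_prob_p_nonneg: "list_prob p ys \<ge> 0"
  by (rule list_prob_nonneg[OF p_nonneg])

lemma P_pos: "P > 0"
proof -
  have "p n \<le> P" unfolding P_def by (rule member_le_sum) (use p_nonneg in auto)
  then show ?thesis using p_n_pos by linarith
qed

lemma \<mu>_pos: "\<mu> > 0"
proof -
  have "real n * p n \<le> \<mu>" unfolding \<mu>_def by (rule member_le_sum) (use p_nonneg in auto)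
  moreover have "real n * p n > 0" using n_pos p_n_pos by simp
  ultimately show ?thesis by linarith
qed

lemma r_eq: "r = \<theta> powr (x / 2)"
  unfolding r_def \<theta>_def \<mu>_def P_def ..

lemma \<theta>_nonneg: "\<theta> \<ge> 0"
  unfolding \<theta>_def using x_pos \<mu>_pos P_pos by simp

lemma r_bounds: "0 \<le> r" "r \<le> x" "8 * C * r \<le> x"
proof -
  show r_nonneg: "0 \<le> r" unfolding r_eq by simp
  then have "0 \<le> 8 * C * r" using C_nonneg by simp
  then show "r \<le> x" "8 * C * r \<le> x" using r_small r_nonneg by (auto simp: algebra_simps)
qed

lemma \<theta>_le_1: "\<theta> \<le> 1"
proof (rule ccontr)
  assume "\<not> \<theta> \<le> 1"
  then have "1 \<le> r" unfolding r_eq using x_pos by (intro ge_one_powr_ge_zero) auto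
  then show False using r_bounds x_small by simp
qed

lemma sum_list_prob_S: "(\<Sum>ys\<in>S. list_prob p ys) = P ^ (k - 1)"
  unfolding S_def list_prob_def P_def by (rule sum_prod_list_lists_length_eq_power)

lemma finite_S: "finite S"
  unfolding S_def by (rule finite_lists_length_eq) simp

lemma B_subset_S: "B \<subseteq> S"
  unfolding B_def by auto

lemma finite_large: "finite (large i)"
  unfolding large_def by (rule finite_subset[OF _ finite_lists_length_eq[of "{..n div 2 ^ i}" "k - 1"]]) auto

lemma F_nonneg: "F ys \<ge> 0"
  unfolding F_def by (intro sum_nonneg list_prob_p_nonneg)

lemma in_S_if_tau_fibre_nonempty: "xs \<in> tau_fibre k n ys \<Longrightarrow> ys \<in> S"
  using tau_fibre_memD[OF _ k_pos] unfolding S_def by fastforce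

lemma F_eq_0: "ys \<notin> S \<Longrightarrow> F ys = 0"
  using in_S_if_tau_fibre_nonempty unfolding F_def by (metis equals0I sum.empty)

lemma A_eq_sum_F: "A = (\<Sum>ys\<in>S. F ys)"
proof -
  let ?X = "{xs. length xs = k \<and> sum_list xs = n}"
  have "tau ` ?X \<subseteq> S"
    using in_S_if_tau_fibre_nonempty unfolding tau_fibre_def by blast
  then have "A = (\<Sum>ys\<in>S. \<Sum>xs\<in>{xs \<in> ?X. tau xs = ys}. list_prob p xs)"
    unfolding A_def by (rule sum.group[OF finite_lists_length_sum finite_S, symmetric])
  also have "\<dots> = (\<Sum>ys\<in>S. F ys)"
    unfolding F_def tau_fibre_def by (intro sum.cong) (auto intro!: sum.cong)
  finally show ?thesis .
qed

lemma sum_list_prob_large: "(\<Sum>ys\<in>large i. list_prob p ys) \<le> P ^ (k - 1) * r ^ Suc i"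
proof (cases "n div 2 ^ i = 0")
  case True
  have "ys \<notin> large i" for ys
  proof
    assume ys: "ys \<in> large i"
    then have "real (sum_list ys) = 0" using True by (auto simp: large_def)
    moreover have "x * real n \<le> real (sum_list ys)" using ys by (simp add: large_def)
    moreover have "x * real n > 0" using x_pos n_pos by simp
    ultimately show False by linarith
  qed
  then have "large i = {}" by blast
  then show ?thesis using P_pos r_bounds by simp
next
  case False
  define y where "y = n div 2 ^ i"
  have "y * 2 ^ i \<le> n" unfolding y_def by (rule div_times_less_eq_dividend)
  then have "real (y * 2 ^ i) \<le> real n" by (rule of_nat_mono)
  then have y: "1 \<le> y" "y \<le> n" "real y * 2 ^ i \<le> real n"
    using False unfolding y_def by auto
  have sum_p: "(\<Sum>j\<le>y. p j) \<le> P" "(\<Sum>j\<le>y. real j * p j) \<le> \<mu>"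
    unfolding P_def \<mu>_def using y(2) p_nonneg by (intro sum_mono2; auto)+
  have "x * real n > 0" using x_pos n_pos by simp
  have "(\<Sum>ys\<in>large i. list_prob p ys)
      = (\<Sum>xs | set xs \<subseteq> {..y} \<and> length xs = k - 1 \<and> x * real n \<le> real (sum_list xs). prod_list (map p xs))"
    by (simp add: large_def list_prob_def y_def)
  also have "\<dots> \<le> P ^ (k - 1) * \<theta> powr (x * real n / (2 * real y))"
    using chernoff_bound_lists[OF p_nonneg y(1) \<open>x * real n > 0\<close> sum_p(1) P_pos sum_p(2) \<mu>_pos]
      \<theta>_le_1 unfolding \<theta>_def by blast
  also have "\<theta> powr (x * real n / (2 * real y)) \<le> r ^ Suc i"
  proof -
    have "x / 2 * 2 ^ i * real y \<le> x / 2 * real n"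
      using mult_left_mono[OF y(3), of "x / 2"] x_pos by (simp add: mult_ac)
    then have "x / 2 * 2 ^ i \<le> x / 2 * real n / real y" using y(1) by (simp add: pos_le_divide_eq)
    then show ?thesis
      unfolding r_eq using \<theta>_nonneg \<theta>_le_1 x_pos by (intro powr_le_power_Suc_if_dyadic) auto
  qed
  finally show ?thesis using P_pos by (simp add: mult_left_mono)
qed

lemma sum_list_prob_B: "(\<Sum>ys\<in>B. list_prob p ys) \<ge> P ^ (k - 1) * (1 - r)"
proof -
  have "S - B \<subseteq> large 0" unfolding S_def B_def large_def by auto
  then have "(\<Sum>ys\<in>S - B. list_prob p ys) \<le> (\<Sum>ys\<in>large 0. list_prob p ys)"
    using list_prob_p_nonneg finite_large by (intro sum_mono2) auto
  also have "\<dots> \<le> P ^ (k - 1) * r" using sum_list_prob_large[of 0] by simp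
  finally have "(\<Sum>ys\<in>S - B. list_prob p ys) \<le> P ^ (k - 1) * r" .
  moreover have "(\<Sum>ys\<in>S. list_prob p ys) = (\<Sum>ys\<in>S - B. list_prob p ys) + (\<Sum>ys\<in>B. list_prob p ys)"
    by (rule sum.subset_diff[OF B_subset_S finite_S])
  moreover have "P ^ (k - 1) * (1 - r) = P ^ (k - 1) - P ^ (k - 1) * r" by (simp add: algebra_simps)
  ultimately show ?thesis using sum_list_prob_S by linarith
qed

lemma B_memD:
  assumes "ys \<in> B"
  shows "sum_list ys \<le> n" "(1 - x) * real n \<le> real (n - sum_list ys)"
    "\<forall>y\<in>set ys. y < n - sum_list ys"
proof -
  have sum: "real (sum_list ys) \<le> x * real n" and len: "length ys = k - 1"
    using assms unfolding B_def S_def by auto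
  moreover have "x * real n \<le> real n" using x_pos x_small by (intro mult_left_le_one_le) auto
  ultimately show sn: "sum_list ys \<le> n" by linarith
  then show m: "(1 - x) * real n \<le> real (n - sum_list ys)" using sum by (simp add: algebra_simps)
  have "x * real n < (1 - x) * real n" using x_pos x_small n_pos by (intro mult_strict_right_mono) auto
  then show "\<forall>y\<in>set ys. y < n - sum_list ys"
    using sum m member_le_sum_list[of _ ys] by fastforce
qed

lemma F_lower_B:
  assumes "ys \<in> B"
  shows "real k * ((1 - x) * p n) * list_prob p ys \<le> F ys"
proof -
  note m = B_memD[OF assms]
  have "F ys = real k * p (n - sum_list ys) * list_prob p ys"
    unfolding F_def using assms k_pos m by (intro sum_tau_fibre_eq) (auto simp: B_def S_def)
  moreover have "(1 - x) * p n \<le> p (n - sum_list ys)" using p_flat[OF m(2)] by simp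
  ultimately show ?thesis using list_prob_p_nonneg[of ys] by (simp add: mult_right_mono mult_left_mono)
qed

lemma F_upper_B:
  assumes "ys \<in> B"
  shows "F ys \<le> real k * ((1 + x) / (1 - x) * p n) * list_prob p ys"
proof -
  have "F ys \<le> real k * p (n - sum_list ys) * list_prob p ys"
    unfolding F_def by (rule sum_tau_fibre_le[of p k, OF p_nonneg k_pos])
  also have "\<dots> \<le> real k * ((1 + x) / (1 - x) * p n) * list_prob p ys"
    using p_flat[OF B_memD(2)[OF assms]] list_prob_p_nonneg[of ys]
    by (intro mult_right_mono mult_left_mono) auto
  finally show ?thesis .
qed

text \<open>Off \<open>B\<close> the deleted maximum \<open>m\<close> can be small; grouping \<open>ys\<close> by the dyadic scale
  \<open>n / m \<approx> 2^i\<close> puts \<open>ys\<close> into \<open>large i\<close>, whose mass decays like \<open>r^(i+1)\<close>, while the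
  polynomial bound on \<open>p\<close> only costs a factor \<open>4^(i+1)\<close>.\<close>
lemma F_upper_off_B:
  assumes "ys \<in> S - B"
  shows "F ys \<le> (\<Sum>i\<le>n. real k * C * 4 ^ Suc i * p n * (if ys \<in> large i then list_prob p ys else 0))"
proof (cases "tau_fibre k n ys = {}")
  case True
  then show ?thesis using C_nonneg p_n_pos list_prob_p_nonneg by (auto simp: F_def intro!: sum_nonneg)
next
  case False
  then obtain xs where xs: "xs \<in> tau_fibre k n ys" by blast
  define m where "m = n - sum_list ys"
  have le_m: "\<forall>y\<in>set ys. y \<le> m" and "m \<le> n"
    using tau_fibre_memD[OF xs k_pos] unfolding m_def by auto
  have big: "x * real n < real (sum_list ys)" and len: "length ys = k - 1"
    using assms unfolding B_def S_def by auto
  have "m \<ge> 1"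
  proof (rule ccontr)
    assume "\<not> m \<ge> 1"
    then have "real (sum_list ys) = 0" using le_m by auto
    moreover have "0 \<le> x * real n" using x_pos by simp
    ultimately show False using big by linarith
  qed
  then obtain i where i: "i \<le> n" "m \<le> n div 2 ^ i" "real n / real m \<le> 2 ^ Suc i"
    using exists_dyadic_scale \<open>m \<le> n\<close> by blast
  have large: "ys \<in> large i" using le_m i(2) big len unfolding large_def by auto
  have "F ys \<le> real k * p m * list_prob p ys"
    unfolding F_def m_def by (rule sum_tau_fibre_le[of p k, OF p_nonneg k_pos])
  also have "\<dots> \<le> real k * (C * 4 ^ Suc i * p n) * list_prob p ys"
  proof -
    have "(real n / real m) ^ 2 \<le> (2 ^ Suc i) ^ 2" using i(3) by (intro power_mono) auto
    also have "\<dots> = 4 ^ Suc i" by (simp add: power2_eq_square power_mult_distrib[symmetric])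
    finally have "C * (real n / real m) ^ 2 * p n \<le> C * 4 ^ Suc i * p n"
      using C_nonneg p_n_pos by (intro mult_right_mono mult_left_mono) auto
    with p_poly[OF \<open>m \<ge> 1\<close> \<open>m \<le> n\<close>] have "p m \<le> C * 4 ^ Suc i * p n" by linarith
    then show ?thesis using list_prob_p_nonneg[of ys] by (intro mult_right_mono mult_left_mono) auto
  qed
  also have "\<dots> = real k * C * 4 ^ Suc i * p n * (if ys \<in> large i then list_prob p ys else 0)"
    using large by simp
  also have "\<dots> \<le> (\<Sum>i\<le>n. real k * C * 4 ^ Suc i * p n * (if ys \<in> large i then list_prob p ys else 0))"
    by (rule member_le_sum) (use i(1) C_nonneg p_n_pos list_prob_p_nonneg in auto)
  finally show ?thesis .
qed

lemma sum_F_B_le: "(\<Sum>ys\<in>B. F ys) \<le> real k * ((1 + x) / (1 - x) * p n) * P ^ (k - 1)"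
proof -
  have "(\<Sum>ys\<in>B. F ys) \<le> (\<Sum>ys\<in>B. real k * ((1 + x) / (1 - x) * p n) * list_prob p ys)"
    by (intro sum_mono F_upper_B)
  also have "\<dots> = real k * ((1 + x) / (1 - x) * p n) * (\<Sum>ys\<in>B. list_prob p ys)"
    by (simp add: sum_distrib_left)
  also have "\<dots> \<le> real k * ((1 + x) / (1 - x) * p n) * (\<Sum>ys\<in>S. list_prob p ys)"
    using x_pos x_small p_n_pos list_prob_p_nonneg
    by (intro mult_left_mono sum_mono2 finite_S B_subset_S) auto
  finally show ?thesis unfolding sum_list_prob_S .
qed

lemma sum_F_off_B_le: "(\<Sum>ys\<in>S - B. F ys) \<le> 8 * real k * C * p n * P ^ (k - 1) * r"
proof -
  define c where "c i = real k * C * 4 ^ Suc i * p n" for i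
  have "(\<Sum>ys\<in>S - B. F ys) \<le> (\<Sum>ys\<in>S - B. \<Sum>i\<le>n. c i * (if ys \<in> large i then list_prob p ys else 0))"
    unfolding c_def by (intro sum_mono F_upper_off_B)
  also have "\<dots> = (\<Sum>i\<le>n. c i * (\<Sum>ys\<in>S - B. if ys \<in> large i then list_prob p ys else 0))"
    by (subst sum.swap) (simp add: sum_distrib_left)
  also have "\<dots> = (\<Sum>i\<le>n. c i * (\<Sum>ys\<in>(S - B) \<inter> large i. list_prob p ys))"
    using finite_S by (simp add: sum.inter_restrict)
  also have "\<dots> \<le> (\<Sum>i\<le>n. c i * (P ^ (k - 1) * r ^ Suc i))"
  proof (intro sum_mono mult_left_mono)
    fix i
    have "(\<Sum>ys\<in>(S - B) \<inter> large i. list_prob p ys) \<le> (\<Sum>ys\<in>large i. list_prob p ys)"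
      using list_prob_p_nonneg finite_large by (intro sum_mono2) auto
    then show "(\<Sum>ys\<in>(S - B) \<inter> large i. list_prob p ys) \<le> P ^ (k - 1) * r ^ Suc i"
      using sum_list_prob_large by (rule order_trans)
    show "0 \<le> c i" using C_nonneg p_n_pos unfolding c_def by simp
  qed
  also have "\<dots> = real k * C * p n * P ^ (k - 1) * (\<Sum>i\<le>n. (4 * r) ^ Suc i)"
    unfolding c_def by (simp add: sum_distrib_left power_mult_distrib algebra_simps)
  also have "\<dots> \<le> real k * C * p n * P ^ (k - 1) * (2 * (4 * r))"
    using r_bounds x_small C_nonneg p_n_pos P_pos by (intro mult_left_mono sum_power_Suc_le) auto
  finally show ?thesis by (simp add: algebra_simps)
qed

lemma A_upper: "A \<le> real k * P ^ (k - 1) * p n * ((1 + x) / (1 - x) + 8 * C * r)"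
proof -
  have "A = (\<Sum>ys\<in>S - B. F ys) + (\<Sum>ys\<in>B. F ys)"
    unfolding A_eq_sum_F by (rule sum.subset_diff[OF B_subset_S finite_S])
  moreover have "real k * P ^ (k - 1) * p n * ((1 + x) / (1 - x) + 8 * C * r)
      = real k * ((1 + x) / (1 - x) * p n) * P ^ (k - 1) + 8 * real k * C * p n * P ^ (k - 1) * r"
    by (simp add: algebra_simps)
  ultimately show ?thesis using sum_F_B_le sum_F_off_B_le by linarith
qed

lemma A_pos: "A > 0"
proof -
  have "0 < P ^ (k - 1) * (1 - r)" using P_pos r_bounds x_small by simp
  then have "0 < (\<Sum>ys\<in>B. list_prob p ys)" using sum_list_prob_B by linarith
  then obtain ys where ys: "ys \<in> B" "list_prob p ys > 0" by (meson not_le sum_nonpos)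
  have "0 < real k * ((1 - x) * p n) * list_prob p ys" using k_pos x_small p_n_pos ys(2) by simp
  also have "\<dots> \<le> F ys" by (rule F_lower_B[OF ys(1)])
  also have "\<dots> \<le> (\<Sum>ys\<in>S. F ys)" using ys(1) B_subset_S finite_S F_nonneg by (intro member_le_sum) auto
  finally show ?thesis unfolding A_eq_sum_F .
qed

lemma F_div_A_lower:
  assumes "ys \<in> B"
  shows "(1 - 4 * x) * (list_prob p ys / P ^ (k - 1)) \<le> F ys / A"
proof -
  define D where "D = (1 + x) / (1 - x) + 8 * C * r"
  have "D > 0" unfolding D_def using x_small x_pos C_nonneg r_bounds by (intro add_pos_nonneg) auto
  have "(1 - 4 * x) * D \<le> (1 - 4 * x) * ((1 + x) / (1 - x) + x)"
    using r_bounds x_small unfolding D_def by (intro mult_left_mono) auto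
  also have "\<dots> = (1 - x) - x ^ 2 * (10 - 4 * x) / (1 - x)"
    using x_small by (simp add: field_simps power2_eq_square power3_eq_cube)
  also have "\<dots> \<le> 1 - x" using x_pos x_small by simp
  finally have factor: "1 - 4 * x \<le> (1 - x) / D" using \<open>D > 0\<close> by (simp add: pos_le_divide_eq)
  have "(1 - 4 * x) * (list_prob p ys / P ^ (k - 1)) \<le> (1 - x) / D * (list_prob p ys / P ^ (k - 1))"
    using factor list_prob_p_nonneg[of ys] P_pos by (intro mult_right_mono) auto
  also have "\<dots> = real k * ((1 - x) * p n) * list_prob p ys / (real k * P ^ (k - 1) * p n * D)"
    using k_pos p_n_pos P_pos \<open>D > 0\<close> by (simp add: field_simps)
  also have "\<dots> \<le> F ys / A"
    using F_lower_B[OF assms] A_upper A_pos F_nonneg[of ys] k_pos p_n_pos P_pos \<open>D > 0\<close>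
    unfolding D_def[symmetric] by (intro frac_le) auto
  finally show ?thesis .
qed

lemma cond_tau_law_eq: "cond_tau_law p k n ys = F ys / A"
  unfolding cond_tau_law_def F_def A_def tau_fibre_def ..

lemma trunc_law_eq: "trunc_law p k n ys = (if ys \<in> S then list_prob p ys / P ^ (k - 1) else 0)"
proof -
  have set_eq: "{zs. length zs = k - 1 \<and> (\<forall>z\<in>set zs. z \<le> n)} = S" unfolding S_def by auto
  have mem: "(length ys = k - 1 \<and> (\<forall>y\<in>set ys. y \<le> n)) = (ys \<in> S)" unfolding S_def by auto
  show ?thesis unfolding trunc_law_def set_eq mem sum_list_prob_S ..
qed

lemma sum_min_B_lower:
  "(1 - 4 * x) * (1 - r) \<le> (\<Sum>ys\<in>B. min (F ys / A) (list_prob p ys / P ^ (k - 1)))"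
proof -
  have "(1 - 4 * x) * (1 - r) \<le> (1 - 4 * x) * ((\<Sum>ys\<in>B. list_prob p ys) / P ^ (k - 1))"
    using sum_list_prob_B P_pos x_small by (intro mult_left_mono) (auto simp: pos_le_divide_eq mult.commute)
  also have "\<dots> = (\<Sum>ys\<in>B. (1 - 4 * x) * (list_prob p ys / P ^ (k - 1)))"
    by (simp add: sum_distrib_left sum_divide_distrib)
  also have "\<dots> \<le> (\<Sum>ys\<in>B. min (F ys / A) (list_prob p ys / P ^ (k - 1)))"
  proof (rule sum_mono)
    fix ys assume "ys \<in> B"
    have "(1 - 4 * x) * (list_prob p ys / P ^ (k - 1)) \<le> list_prob p ys / P ^ (k - 1)"
      using x_pos x_small list_prob_p_nonneg[of ys] P_pos by (intro mult_left_le_one_le) auto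
    then show "(1 - 4 * x) * (list_prob p ys / P ^ (k - 1)) \<le> min (F ys / A) (list_prob p ys / P ^ (k - 1))"
      using F_div_A_lower[OF \<open>ys \<in> B\<close>] by simp
  qed
  finally show ?thesis .
qed

lemma one_minus_lower_le: "1 - (1 - 4 * x) * (1 - r) \<le> 5 * x"
proof -
  have "0 \<le> r * x" using x_pos r_bounds by simp
  moreover have "1 - (1 - 4 * x) * (1 - r) = 4 * x + r - 4 * (r * x)" by (simp add: algebra_simps)
  ultimately show ?thesis using r_bounds by linarith
qed

lemma tv_dist_le: "tv_dist (cond_tau_law p k n) (trunc_law p k n) \<le> 5 * x"
proof -
  have "tv_dist (cond_tau_law p k n) (trunc_law p k n)
      = 1 - (\<Sum>ys\<in>S. min (cond_tau_law p k n ys) (trunc_law p k n ys))"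
  proof (rule tv_dist_eq_one_minus_sum_min[OF finite_S])
    show "sum (cond_tau_law p k n) S = 1"
      using A_pos by (simp add: cond_tau_law_eq sum_divide_distrib[symmetric] A_eq_sum_F[symmetric])
    show "sum (trunc_law p k n) S = 1"
      using P_pos by (simp add: trunc_law_eq sum_divide_distrib[symmetric] sum_list_prob_S)
  qed (auto simp: cond_tau_law_eq trunc_law_eq F_eq_0)
  also have "(\<Sum>ys\<in>S. min (cond_tau_law p k n ys) (trunc_law p k n ys))
      \<ge> (\<Sum>ys\<in>B. min (F ys / A) (list_prob p ys / P ^ (k - 1)))"
    using B_subset_S F_nonneg A_pos list_prob_p_nonneg P_pos
    by (auto simp: cond_tau_law_eq trunc_law_eq intro!: sum_mono2[OF finite_S])
  then have "1 - (\<Sum>ys\<in>S. min (cond_tau_law p k n ys) (trunc_law p k n ys)) \<le> 1 - (1 - 4 * x) * (1 - r)"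
    using sum_min_B_lower by linarith
  also note one_minus_lower_le
  finally show ?thesis .
qed

lemma max_close_if_tau_in_B:
  assumes "length xs = k" "sum_list xs = n" "tau xs \<in> B"
  shows "\<bar>real (Max (set xs)) / real n - 1\<bar> \<le> x"
proof -
  have "xs \<in> tau_fibre k n (tau xs)" using assms by (simp add: tau_fibre_def)
  from tau_fibre_memD[OF this k_pos]
  have "\<bar>real (Max (set xs)) / real n - 1\<bar> = real (sum_list (tau xs)) / real n"
    using n_pos by (simp add: field_simps of_nat_diff)
  also have "\<dots> \<le> x" using assms(3) n_pos by (simp add: B_def divide_le_eq mult.commute)
  finally show ?thesis .
qed

lemma sum_tau_in_B: "(\<Sum>xs | length xs = k \<and> sum_list xs = n \<and> tau xs \<in> B. list_prob p xs) = (\<Sum>ys\<in>B. F ys)"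
proof -
  let ?T = "{xs. length xs = k \<and> sum_list xs = n \<and> tau xs \<in> B}"
  have "finite ?T" by (rule finite_subset[OF _ finite_lists_length_sum[of k n]]) auto
  have "(\<Sum>ys\<in>B. F ys) = (\<Sum>ys\<in>B. \<Sum>xs\<in>{xs \<in> ?T. tau xs = ys}. list_prob p xs)"
    unfolding F_def tau_fibre_def by (intro sum.cong) (auto intro!: sum.cong)
  also have "\<dots> = (\<Sum>xs\<in>?T. list_prob p xs)"
    by (rule sum.group[OF \<open>finite ?T\<close> finite_subset[OF B_subset_S finite_S]]) auto
  finally show ?thesis by simp
qed

lemma cond_max_dev_le:
  assumes "x \<le> \<epsilon>"
  shows "cond_max_dev p k n \<epsilon> \<le> 5 * x"
proof -
  let ?X = "{xs. length xs = k \<and> sum_list xs = n}"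
  let ?D = "{xs. length xs = k \<and> sum_list xs = n \<and> \<epsilon> < \<bar>real (Max (set xs)) / real n - 1\<bar>}"
  let ?T = "{xs. length xs = k \<and> sum_list xs = n \<and> tau xs \<in> B}"
  have "?D \<subseteq> ?X - ?T" using max_close_if_tau_in_B assms by fastforce
  then have "cond_max_dev p k n \<epsilon> \<le> (\<Sum>xs\<in>?X - ?T. list_prob p xs) / A"
    unfolding cond_max_dev_def A_def[symmetric] using finite_lists_length_sum A_pos list_prob_p_nonneg
    by (intro divide_right_mono sum_mono2) auto
  also have "(\<Sum>xs\<in>?X - ?T. list_prob p xs) = A - (\<Sum>ys\<in>B. F ys)"
    unfolding A_def sum_tau_in_B[symmetric] by (rule sum_diff[OF finite_lists_length_sum]) auto
  also have "(A - (\<Sum>ys\<in>B. F ys)) / A = 1 - (\<Sum>ys\<in>B. F ys / A)"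
    using A_pos by (simp add: sum_divide_distrib[symmetric] diff_divide_distrib)
  also have "\<dots> \<le> 1 - (1 - 4 * x) * (1 - r)"
    using sum_min_B_lower sum_mono[of B "\<lambda>ys. min (F ys / A) (list_prob p ys / P ^ (k - 1))" "\<lambda>ys. F ys / A"]
    by auto
  also note one_minus_lower_le
  finally show ?thesis .
qed

end

section \<open>Weights with slowly varying tails\<close>

lemma sum_inverse_sqrt_le: "(\<Sum>j=1..n. 1 / sqrt (real j)) \<le> 2 * sqrt (real n)"
proof (induction n)
  case (Suc n)
  let ?a = "sqrt (real n)" and ?b = "sqrt (real (Suc n))"
  have ab: "?a \<le> ?b" "?b > 0" by auto
  \<comment> \<open>telescoping: \<open>1 = (b - a) (b + a) \<le> 2 b (b - a)\<close>\<close>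
  have "1 = (?b - ?a) * (?b + ?a)" by (simp add: algebra_simps)
  also have "\<dots> \<le> (?b - ?a) * (2 * ?b)" using ab by (intro mult_left_mono) auto
  finally have "1 \<le> 2 * (?b - ?a) * ?b" by (simp only: ac_simps)
  then have "1 / ?b \<le> 2 * (?b - ?a)" by (simp only: pos_divide_le_eq[OF ab(2)])
  then show ?case using Suc by simp
qed simp

lemma tendsto_zero_if_eventually_le:
  fixes f :: "nat \<Rightarrow> real"
  assumes "\<And>n. f n \<ge> 0" and "\<And>e. e > 0 \<Longrightarrow> \<forall>\<^sub>F n in sequentially. f n \<le> e"
  shows "f \<longlonglongrightarrow> 0"
proof (rule order_tendstoI)
  fix a :: real assume "a < 0"
  then show "\<forall>\<^sub>F n in sequentially. a < f n"
    using assms(1) by (intro always_eventually allI) (rule less_le_trans)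
next
  fix e :: real assume "e > 0"
  then show "\<forall>\<^sub>F n in sequentially. f n < e"
    using assms(2)[of "e / 2"] by (auto elim: eventually_mono)
qed

lemma ratio_chain_bounds:
  fixes a em en lm ln :: real
  assumes a: "0 < a" "a \<le> 1/5" and "ln \<ge> 0"
    and m: "(1 - a) * lm \<le> em" "em \<le> (1 + a) * lm"
    and n: "(1 - a) * ln \<le> en" "en \<le> (1 + a) * ln"
    and mn: "(1 - a) * ln \<le> lm" "lm \<le> (1 + a) * ln"
  shows "(1 - 5 * a) * en \<le> em" "em \<le> (1 + 5 * a) * en"
proof -
  have "a * a \<le> a * (1/5)" "0 \<le> a * a" using a by (auto intro: mult_left_mono)
  moreover have "(1 - a) * (1 - a) - (1 - 5 * a) * (1 + a) = 2 * a + 6 * (a * a)"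
    "(1 + 5 * a) * (1 - a) - (1 + a) * (1 + a) = 2 * a - 6 * (a * a)"
    by (simp_all add: algebra_simps)
  ultimately have poly: "(1 - 5 * a) * (1 + a) \<le> (1 - a) * (1 - a)" "(1 + a) * (1 + a) \<le> (1 + 5 * a) * (1 - a)"
    using a by linarith+
  have "(1 - 5 * a) * en \<le> (1 - 5 * a) * ((1 + a) * ln)" using n(2) a by (intro mult_left_mono) auto
  also have "\<dots> \<le> (1 - a) * ((1 - a) * ln)" using mult_right_mono[OF poly(1) \<open>ln \<ge> 0\<close>] by (simp add: mult.assoc)
  also have "\<dots> \<le> (1 - a) * lm" using mn(1) a by (intro mult_left_mono) auto
  also have "\<dots> \<le> em" by (rule m(1))
  finally show "(1 - 5 * a) * en \<le> em" .
  have "em \<le> (1 + a) * lm" by (rule m(2))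
  also have "\<dots> \<le> (1 + a) * ((1 + a) * ln)" using mn(2) a by (intro mult_left_mono) auto
  also have "\<dots> \<le> (1 + 5 * a) * ((1 - a) * ln)" using mult_right_mono[OF poly(2) \<open>ln \<ge> 0\<close>] by (simp add: mult.assoc)
  also have "\<dots> \<le> (1 + 5 * a) * en" using n(1) a by (intro mult_left_mono) auto
  finally show "em \<le> (1 + 5 * a) * en" .
qed

locale slowly_varying_weights =
  fixes w :: "nat \<Rightarrow> real" and \<rho> :: real and L :: "real \<Rightarrow> real" and k :: "nat \<Rightarrow> nat"
  assumes w_nonneg: "\<forall>n. w n \<ge> 0"
    and rho_pos: "\<rho> > 0"
    and L_sv: "slowly_varying L"
    and w_asymp: "w \<sim>[at_top] (\<lambda>n. L (real n) * inverse (real n) * inverse \<rho> ^ n)"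
    and W_fin: "summable (\<lambda>n. w n * \<rho> ^ n)"
    and W_pos: "(\<Sum>n. w n * \<rho> ^ n) > 0"
    and k_pos: "\<forall>n\<ge>1. k n \<ge> 1"
    and kL: "((\<lambda>n. real (k n) * L (real n)) \<longlongrightarrow> 0) sequentially"
begin

definition "W = (\<Sum>n. w n * \<rho> ^ n)"
definition "p = step_prob w \<rho>"
definition "ell j = real j * p j"

lemma W_gt_0: "W > 0"
  using W_pos unfolding W_def .

lemma p_eq: "p j = w j * \<rho> ^ j / W"
  unfolding p_def step_prob_def W_def ..

lemma p_nonneg: "p j \<ge> 0"
  unfolding p_eq using w_nonneg rho_pos W_gt_0 by simp

lemma ell_nonneg: "ell j \<ge> 0"
  unfolding ell_def using p_nonneg by simp

lemma sum_p_tendsto_1: "(\<lambda>n. \<Sum>j\<le>n. p j) \<longlonglongrightarrow> 1"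
proof -
  have "summable p" unfolding p_eq[abs_def] by (rule summable_divide[OF W_fin])
  moreover have "suminf p = 1"
    unfolding p_eq[abs_def] suminf_divide[OF W_fin] using W_gt_0 by (simp add: W_def)
  ultimately show ?thesis using summable_LIMSEQ' by fastforce
qed

lemma ell_L_ratio_tendsto_1: "(\<lambda>n. ell n / (L (real n) / W)) \<longlonglongrightarrow> 1"
proof -
  define g where "g n = L (real n) * inverse (real n) * inverse \<rho> ^ n" for n
  obtain X where X: "\<And>t. t \<ge> X \<Longrightarrow> L t > 0" using slowly_varying_eventually_pos[OF L_sv] by blast
  have ev: "\<forall>\<^sub>F n in sequentially. L (real n) > 0 \<and> n \<ge> 1"
    using eventually_ge_at_top[of "nat \<lceil>X\<rceil>"] eventually_ge_at_top[of 1]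
    by eventually_elim (auto intro!: X simp: nat_le_iff ceiling_le_iff)
  then have "\<forall>\<^sub>F n in sequentially. w n \<noteq> 0 \<or> g n \<noteq> 0"
    by eventually_elim (use rho_pos in \<open>auto simp: g_def\<close>)
  then have "(\<lambda>n. w n / g n) \<longlonglongrightarrow> 1"
    using asymp_equivD_strong[OF w_asymp[folded g_def[abs_def]]] by simp
  moreover have "\<forall>\<^sub>F n in sequentially. w n / g n = ell n / (L (real n) / W)"
    using ev by eventually_elim (use rho_pos W_gt_0 in \<open>simp add: g_def ell_def p_eq field_simps power_inverse\<close>)
  ultimately show ?thesis by (rule Lim_transform_eventually)
qed

lemma ell_L_ratio_bounds:
  assumes "a > 0"
  obtains N where "\<And>n. n \<ge> N \<Longrightarrow> L (real n) > 0 \<and>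
    (1 - a) * (L (real n) / W) \<le> ell n \<and> ell n \<le> (1 + a) * (L (real n) / W)"
proof -
  obtain X where X: "\<And>t. t \<ge> X \<Longrightarrow> L t > 0" using slowly_varying_eventually_pos[OF L_sv] by blast
  have "\<forall>\<^sub>F n in sequentially. \<bar>ell n / (L (real n) / W) - 1\<bar> < a \<and> L (real n) > 0"
    using ell_L_ratio_tendsto_1 assms eventually_ge_at_top[of "nat \<lceil>X\<rceil>"]
    by (intro eventually_conj) (auto simp: tendsto_iff dist_real_def elim!: eventually_mono
        intro!: X simp: nat_le_iff ceiling_le_iff)
  then have "\<forall>\<^sub>F n in sequentially. L (real n) > 0 \<and>
    (1 - a) * (L (real n) / W) \<le> ell n \<and> ell n \<le> (1 + a) * (L (real n) / W)"
    by eventually_elim (use W_gt_0 in \<open>auto simp: abs_less_iff field_simps\<close>)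
  then show ?thesis using that unfolding eventually_sequentially by blast
qed

lemma ell_flat:
  assumes \<eta>: "0 < \<eta>" "\<eta> \<le> 1"
  obtains N where "\<And>n m. n \<ge> N \<Longrightarrow> real n \<le> 2 * real m \<Longrightarrow> m \<le> n \<Longrightarrow>
    (1 - \<eta>) * ell n \<le> ell m \<and> ell m \<le> (1 + \<eta>) * ell n"
proof -
  define a where "a = \<eta> / 5"
  have a: "0 < a" "a \<le> 1/5" using \<eta> unfolding a_def by auto
  obtain X where X: "\<And>x c. x \<ge> X \<Longrightarrow> c \<in> {1/2..1} \<Longrightarrow> \<bar>L (c * x) / L x - 1\<bar> \<le> a"
    using slowly_varying_uniform[OF L_sv a(1)] by blast
  obtain N1 where N1: "\<And>n. n \<ge> N1 \<Longrightarrow> L (real n) > 0 \<and>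
      (1 - a) * (L (real n) / W) \<le> ell n \<and> ell n \<le> (1 + a) * (L (real n) / W)"
    using ell_L_ratio_bounds[OF a(1)] by blast
  have "(1 - \<eta>) * ell n \<le> ell m \<and> ell m \<le> (1 + \<eta>) * ell n"
    if n: "n \<ge> max (2 * N1) (nat \<lceil>X\<rceil>) + 1" and nm: "real n \<le> 2 * real m" "m \<le> n" for n m
  proof -
    have "n \<ge> N1" "m \<ge> N1" "real n \<ge> X" "real n > 0" using n nm by linarith+
    note Ln = N1[OF \<open>n \<ge> N1\<close>] and Lm = N1[OF \<open>m \<ge> N1\<close>]
    have "real m / real n \<in> {1/2..1}" using nm \<open>real n > 0\<close> by (auto simp: field_simps)
    then have "\<bar>L (real m) / L (real n) - 1\<bar> \<le> a"
      using X[OF \<open>real n \<ge> X\<close>] \<open>real n > 0\<close> by fastforce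
    then have ratio: "1 - a \<le> L (real m) / L (real n)" "L (real m) / L (real n) \<le> 1 + a" by auto
    have pos: "L (real n) / W > 0" using Ln W_gt_0 by simp
    have eq: "L (real m) / L (real n) * (L (real n) / W) = L (real m) / W" using Ln by simp
    have "(1 - a) * (L (real n) / W) \<le> L (real m) / W"
      using mult_right_mono[OF ratio(1) less_imp_le[OF pos]] unfolding eq .
    moreover have "L (real m) / W \<le> (1 + a) * (L (real n) / W)"
      using mult_right_mono[OF ratio(2) less_imp_le[OF pos]] unfolding eq .
    ultimately have "(1 - 5 * a) * ell n \<le> ell m" "ell m \<le> (1 + 5 * a) * ell n"
      using ratio_chain_bounds[OF a less_imp_le[OF pos]] Ln Lm by blast+
    then show ?thesis unfolding a_def by simp
  qed
  then show ?thesis using that by blast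
qed

lemma ell_potter:
  obtains C M where "C > 0" "M \<ge> 1" "\<And>j. j \<ge> M \<Longrightarrow> ell j > 0"
    "\<And>n m. M \<le> m \<Longrightarrow> m \<le> n \<Longrightarrow> ell m \<le> C * sqrt (real n / real m) * ell n"
proof -
  obtain X where X: "X > 0" "\<And>t. t \<ge> X \<Longrightarrow> L t > 0"
    "\<And>x y. X \<le> y \<Longrightarrow> y \<le> x \<Longrightarrow> L y \<le> sqrt 2 * sqrt (x / y) * L x"
    using slowly_varying_potter[OF L_sv] by blast
  obtain N1 where N1: "\<And>n. n \<ge> N1 \<Longrightarrow> L (real n) > 0 \<and>
      (1 - 1/2) * (L (real n) / W) \<le> ell n \<and> ell n \<le> (1 + 1/2) * (L (real n) / W)"
    using ell_L_ratio_bounds[of "1/2"] by auto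
  define M where "M = max N1 (nat \<lceil>X\<rceil>) + 1"
  have M: "M \<ge> 1" "M \<ge> N1" "real M \<ge> X" unfolding M_def by linarith+
  have "ell j > 0" if "j \<ge> M" for j
  proof -
    have "N1 \<le> j" using M that by simp
    note Lj = N1[OF this]
    then have "0 < (1 - 1/2) * (L (real j) / W)" using W_gt_0 by simp
    also have "\<dots> \<le> ell j" using Lj by blast
    finally show ?thesis .
  qed
  moreover have "ell m \<le> 3 * sqrt 2 * sqrt (real n / real m) * ell n" if "M \<le> m" "m \<le> n" for n m
  proof -
    have "ell m \<le> 3/2 * (L (real m) / W)" using N1[of m] M that by auto
    also have "\<dots> \<le> 3/2 * (sqrt 2 * sqrt (real n / real m) * (L (real n) / W))"
      using X(3)[of "real m" "real n"] M that W_gt_0 by (simp add: divide_right_mono)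
    also have "\<dots> \<le> 3/2 * (sqrt 2 * sqrt (real n / real m) * (2 * ell n))"
      using N1[of n] M that by (intro mult_left_mono) auto
    also have "\<dots> = 3 * sqrt 2 * sqrt (real n / real m) * ell n" by simp
    finally show ?thesis .
  qed
  ultimately show ?thesis using that[of "3 * sqrt 2" M] M by auto
qed

lemma n_ell_tendsto_at_top: "filterlim (\<lambda>n. real n * ell n) at_top sequentially"
proof -
  obtain C M where C: "C > 0" "M \<ge> 1" and ell_pos: "\<And>j. j \<ge> M \<Longrightarrow> ell j > 0"
    and potter: "\<And>n m. M \<le> m \<Longrightarrow> m \<le> n \<Longrightarrow> ell m \<le> C * sqrt (real n / real m) * ell n"
    by (erule ell_potter)
  define c where "c = ell M * sqrt (real M) / C"
  have "c > 0" unfolding c_def using C ell_pos[of M] by simp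
  \<comment> \<open>Potter's bound with \<open>m = M\<close> gives \<open>n ell(n) \<ge> c sqrt n\<close>\<close>
  have bound: "c * sqrt (real n) \<le> real n * ell n" if "n \<ge> M" for n
  proof -
    have "sqrt (real M) > 0" using C by simp
    have "ell M * sqrt (real M) \<le> C * (sqrt (real n) / sqrt (real M)) * ell n * sqrt (real M)"
      using potter[OF order_refl that] by (intro mult_right_mono) (auto simp: real_sqrt_divide)
    also have "\<dots> = C * (sqrt (real n) * ell n)" using \<open>sqrt (real M) > 0\<close> by simp
    finally have "c \<le> sqrt (real n) * ell n" unfolding c_def using C by (simp add: pos_divide_le_eq mult.commute)
    then have "c * sqrt (real n) \<le> sqrt (real n) * ell n * sqrt (real n)" by (intro mult_right_mono) auto
    also have "\<dots> = real n * ell n" by simp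
    finally show ?thesis .
  qed
  have "filterlim (\<lambda>n. c * sqrt (real n)) at_top sequentially"
    using \<open>c > 0\<close> by (intro filterlim_tendsto_pos_mult_at_top[OF tendsto_const]
        filterlim_compose[OF sqrt_at_top filterlim_real_sequentially])
  moreover have "\<forall>\<^sub>F n in sequentially. c * sqrt (real n) \<le> real n * ell n"
    by (rule eventually_mono[OF eventually_ge_at_top[of M]]) (rule bound)
  ultimately show ?thesis by (rule filterlim_at_top_mono)
qed

lemma eventually_n_ell_ge: "\<forall>\<^sub>F n in sequentially. B \<le> real n * ell n"
  using n_ell_tendsto_at_top unfolding filterlim_at_top by blast

text \<open>For \<open>m \<ge> M\<close> this is Potter's bound; below \<open>M\<close> the values \<open>p m\<close> are bounded and are
  absorbed by \<open>n ell(n) \<rightarrow> \<infinity>\<close>.\<close>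
lemma p_le_if_potter:
  assumes C: "C > 0" "M \<ge> 1"
    and potter: "\<And>n m. M \<le> m \<Longrightarrow> m \<le> n \<Longrightarrow> ell m \<le> C * sqrt (real n / real m) * ell n"
    and n: "Max (p ` {..M}) * real M ^ 2 \<le> real n * ell n" "M \<le> n" and m: "1 \<le> m" "m \<le> n"
  shows "p m \<le> (C + 1) * (real n / real m)^2 * p n"
proof -
  have "real n / real m \<ge> 1" using m by simp
  have "0 \<le> (real n / real m)^2 * p n" using p_nonneg by simp
  show ?thesis
  proof (cases "M \<le> m")
    case True
    have "sqrt (real n / real m) * 1 \<le> sqrt (real n / real m) * sqrt (real n / real m)"
      using \<open>real n / real m \<ge> 1\<close> by (intro mult_left_mono) auto
    then have "sqrt (real n / real m) \<le> real n / real m" by simp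
    have "real m * p m = ell m" by (simp add: ell_def)
    also have "\<dots> \<le> C * sqrt (real n / real m) * ell n" by (rule potter[OF True m(2)])
    also have "\<dots> \<le> C * (real n / real m) * ell n"
      using \<open>sqrt (real n / real m) \<le> real n / real m\<close> C ell_nonneg[of n]
      by (intro mult_right_mono mult_left_mono) auto
    also have "\<dots> = real m * (C * (real n / real m)^2 * p n)"
      using m by (simp add: ell_def power2_eq_square field_simps)
    finally have "p m \<le> C * (real n / real m)^2 * p n" using m by simp
    also have "\<dots> \<le> (C + 1) * (real n / real m)^2 * p n"
      using \<open>0 \<le> (real n / real m)^2 * p n\<close> by (simp add: distrib_right mult.assoc)
    finally show ?thesis .
  next
    case False
    then have "p m \<le> Max (p ` {..M})" by (intro Max_ge) auto
    also have "\<dots> \<le> (real n / real M)^2 * p n"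
      using n C by (simp add: ell_def power2_eq_square field_simps)
    also have "\<dots> \<le> (real n / real m)^2 * p n"
      using False m p_nonneg by (intro mult_right_mono power_mono divide_left_mono) auto
    also have "\<dots> \<le> (C + 1) * ((real n / real m)^2 * p n)"
      using mult_right_mono[of 1 "C + 1" "(real n / real m)^2 * p n"] C \<open>0 \<le> (real n / real m)^2 * p n\<close>
      by simp
    also have "\<dots> = (C + 1) * (real n / real m)^2 * p n" by simp
    finally show ?thesis .
  qed
qed

lemma p_poly_eventually:
  obtains C where "C \<ge> 0"
    "\<forall>\<^sub>F n in sequentially. \<forall>m. 1 \<le> m \<longrightarrow> m \<le> n \<longrightarrow> p m \<le> C * (real n / real m)^2 * p n"
proof -
  obtain C M where C: "C > 0" "M \<ge> 1" and "\<And>j. j \<ge> M \<Longrightarrow> ell j > 0"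
    and potter: "\<And>n m. M \<le> m \<Longrightarrow> m \<le> n \<Longrightarrow> ell m \<le> C * sqrt (real n / real m) * ell n"
    by (erule ell_potter)
  have "\<forall>\<^sub>F n in sequentially. \<forall>m. 1 \<le> m \<longrightarrow> m \<le> n \<longrightarrow> p m \<le> (C + 1) * (real n / real m)^2 * p n"
    using eventually_n_ell_ge[of "Max (p ` {..M}) * real M ^ 2"] eventually_ge_at_top[of M]
    by eventually_elim (auto intro: p_le_if_potter[OF C potter])
  then show ?thesis using that[of "C + 1"] C by auto
qed

lemma k_ell_tendsto_0: "(\<lambda>n. real (k n) * ell n) \<longlonglongrightarrow> 0"
proof (rule real_tendsto_sandwich[where f="\<lambda>n. 0" and h="\<lambda>n. (3/2) / W * (real (k n) * L (real n))"])
  obtain N where N: "\<And>n. n \<ge> N \<Longrightarrow> L (real n) > 0 \<and>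
      (1 - 1/2) * (L (real n) / W) \<le> ell n \<and> ell n \<le> (1 + 1/2) * (L (real n) / W)"
    using ell_L_ratio_bounds[of "1/2"] by auto
  have "real (k n) * ell n \<le> (3/2) / W * (real (k n) * L (real n))" if "n \<ge> N" for n
  proof -
    have "real (k n) * ell n \<le> real (k n) * ((1 + 1/2) * (L (real n) / W))"
      using N[OF that] by (intro mult_left_mono) simp_all
    then show ?thesis by simp
  qed
  then show "\<forall>\<^sub>F n in sequentially. real (k n) * ell n \<le> (3/2) / W * (real (k n) * L (real n))"
    by (simp add: eventually_mono[OF eventually_ge_at_top[of N]])
  have "(\<lambda>n. (3/2) / W * (real (k n) * L (real n))) \<longlonglongrightarrow> (3/2) / W * 0"
    by (intro tendsto_mult tendsto_const kL)
  then show "(\<lambda>n. (3/2) / W * (real (k n) * L (real n))) \<longlonglongrightarrow> 0" by simp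
qed (auto simp: ell_nonneg)

text \<open>By Potter's bound, \<open>(\<Sum>j\<le>n. ell j) \<le> D + C ell(n) sqrt n (\<Sum>j\<le>n. 1 / sqrt j) \<le> D + 2 C n ell(n)\<close>.\<close>
lemma sum_ell_le_eventually:
  obtains D where "\<forall>\<^sub>F n in sequentially. (\<Sum>j\<le>n. ell j) \<le> D * (real n * ell n)"
proof -
  obtain C M where C: "C > 0" "M \<ge> 1" and "\<And>j. j \<ge> M \<Longrightarrow> ell j > 0"
    and potter: "\<And>n m. M \<le> m \<Longrightarrow> m \<le> n \<Longrightarrow> ell m \<le> C * sqrt (real n / real m) * ell n"
    by (erule ell_potter)
  define D where "D = (\<Sum>j<M. ell j)"
  have "D \<ge> 0" unfolding D_def by (simp add: ell_nonneg sum_nonneg)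
  have bound: "(\<Sum>j\<le>n. ell j) \<le> (D + 2 * C) * (real n * ell n)"
    if n: "M \<le> n" "1 \<le> real n * ell n" for n
  proof -
    have split: "{..n} = {..<M} \<union> {M..n}" using n by auto
    have "(\<Sum>j\<le>n. ell j) = D + (\<Sum>j=M..n. ell j)"
      unfolding D_def split by (rule sum.union_disjoint) auto
    also have "(\<Sum>j=M..n. ell j) \<le> (\<Sum>j=M..n. C * ell n * sqrt (real n) * (1 / sqrt (real j)))"
      using potter by (intro sum_mono) (auto simp: real_sqrt_divide mult_ac)
    also have "\<dots> = C * ell n * sqrt (real n) * (\<Sum>j=M..n. 1 / sqrt (real j))"
      by (simp add: sum_distrib_left)
    also have "\<dots> \<le> C * ell n * sqrt (real n) * (\<Sum>j=1..n. 1 / sqrt (real j))"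
      using C ell_nonneg[of n] by (intro mult_left_mono sum_mono2) auto
    also have "\<dots> \<le> C * ell n * sqrt (real n) * (2 * sqrt (real n))"
      using C ell_nonneg[of n] by (intro mult_left_mono sum_inverse_sqrt_le) auto
    also have "\<dots> = 2 * C * (real n * ell n)" by simp
    also have "D \<le> D * (real n * ell n)" using \<open>D \<ge> 0\<close> n(2) by (simp add: mult_le_cancel_left1)
    finally show ?thesis by (simp add: algebra_simps)
  qed
  have "\<forall>\<^sub>F n in sequentially. (\<Sum>j\<le>n. ell j) \<le> (D + 2 * C) * (real n * ell n)"
    using eventually_ge_at_top[of M] eventually_n_ell_ge[of 1] by eventually_elim (rule bound)
  then show ?thesis by (rule that)
qed

lemma k_mean_tendsto_0: "(\<lambda>n. real (k n) * (\<Sum>j\<le>n. real j * p j) / real n) \<longlonglongrightarrow> 0"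
proof -
  obtain D where D: "\<forall>\<^sub>F n in sequentially. (\<Sum>j\<le>n. ell j) \<le> D * (real n * ell n)"
    by (erule sum_ell_le_eventually)
  show ?thesis
  proof (rule real_tendsto_sandwich[where f="\<lambda>n. 0" and h="\<lambda>n. D * (real (k n) * ell n)"])
    show "\<forall>\<^sub>F n in sequentially. real (k n) * (\<Sum>j\<le>n. real j * p j) / real n \<le> D * (real (k n) * ell n)"
      using D eventually_ge_at_top[of 1]
    proof eventually_elim
      case (elim n)
      then have "real (k n) * (\<Sum>j\<le>n. ell j) \<le> real (k n) * (D * (real n * ell n))"
        by (intro mult_left_mono) auto
      then show ?case using elim by (simp add: ell_def divide_le_eq algebra_simps)
    qed
    have "(\<lambda>n. D * (real (k n) * ell n)) \<longlonglongrightarrow> D * 0" by (intro tendsto_mult tendsto_const k_ell_tendsto_0)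
    then show "(\<lambda>n. D * (real (k n) * ell n)) \<longlonglongrightarrow> 0" by simp
  qed (auto intro!: always_eventually divide_nonneg_nonneg mult_nonneg_nonneg sum_nonneg simp: p_nonneg)
qed

lemma p_flat_if_ell_flat:
  assumes x: "0 < x" "x \<le> 1/8" and "n \<ge> 1"
    and flat: "\<And>m. real n \<le> 2 * real m \<Longrightarrow> m \<le> n \<Longrightarrow> (1 - x) * ell n \<le> ell m \<and> ell m \<le> (1 + x) * ell n"
    and m: "(1 - x) * real n \<le> real m" "m \<le> n"
  shows "(1 - x) * p n \<le> p m \<and> p m \<le> (1 + x) / (1 - x) * p n"
proof -
  have "real n > 0" using \<open>n \<ge> 1\<close> by simp
  have "(1/2) * real n \<le> (1 - x) * real n" using x \<open>real n > 0\<close> by (intro mult_right_mono) auto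
  then have "real n \<le> 2 * real m" using m(1) by linarith
  then have "real m > 0" using \<open>real n > 0\<close> by linarith
  from flat[OF \<open>real n \<le> 2 * real m\<close> m(2)]
  have lo: "(1 - x) * ell n \<le> ell m" and up: "ell m \<le> (1 + x) * ell n" by auto
  have pm: "p m = ell m / real m" and pn: "p n = ell n / real n"
    using \<open>real m > 0\<close> \<open>real n > 0\<close> by (simp_all add: ell_def)
  have "(1 - x) * p n = (1 - x) * ell n / real n" unfolding pn by simp
  also have "\<dots> \<le> (1 - x) * ell n / real m"
    using m(2) \<open>real m > 0\<close> ell_nonneg[of n] x by (intro divide_left_mono) auto
  also have "\<dots> \<le> p m" unfolding pm using lo \<open>real m > 0\<close> by (intro divide_right_mono) auto
  finally have lower: "(1 - x) * p n \<le> p m" .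
  have "p m \<le> (1 + x) * ell n / real m" unfolding pm using up \<open>real m > 0\<close> by (intro divide_right_mono) auto
  also have "\<dots> \<le> (1 + x) * ell n / ((1 - x) * real n)"
    using m(1) x \<open>real n > 0\<close> \<open>real m > 0\<close> ell_nonneg[of n] by (intro divide_left_mono mult_pos_pos) auto
  also have "\<dots> = (1 + x) / (1 - x) * p n" unfolding pn by simp
  finally show ?thesis using lower by simp
qed

definition "chernoff_rate x n =
  (2 * real (k n - 1) * (\<Sum>j\<le>n. real j * p j) / (x * real n * (\<Sum>j\<le>n. p j))) powr (x / 2)"

lemma chernoff_rate_tendsto_0:
  assumes "x > 0"
  shows "chernoff_rate x \<longlonglongrightarrow> 0"
proof -
  define \<theta> where "\<theta> n = 2 * real (k n - 1) * (\<Sum>j\<le>n. real j * p j) / (x * real n * (\<Sum>j\<le>n. p j))" for n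
  have nonneg: "\<theta> n \<ge> 0" for n unfolding \<theta>_def using assms p_nonneg by (simp add: sum_nonneg)
  have "\<forall>\<^sub>F n in sequentially. (1/2 :: real) < (\<Sum>j\<le>n. p j)"
    using sum_p_tendsto_1 by (rule order_tendstoD) simp
  then have upper: "\<forall>\<^sub>F n in sequentially. \<theta> n \<le> 4 / x * (real (k n) * (\<Sum>j\<le>n. real j * p j) / real n)"
    using eventually_ge_at_top[of 1]
  proof eventually_elim
    case (elim n)
    have "0 \<le> 2 * real (k n) * (\<Sum>j\<le>n. real j * p j)" using p_nonneg by (simp add: sum_nonneg)
    moreover have "2 * real (k n - 1) * (\<Sum>j\<le>n. real j * p j) \<le> 2 * real (k n) * (\<Sum>j\<le>n. real j * p j)"
      using p_nonneg by (intro mult_right_mono sum_nonneg) auto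
    moreover have "0 < x * real n * (1/2)" "x * real n * (1/2) \<le> x * real n * (\<Sum>j\<le>n. p j)"
      using elim assms by auto
    ultimately have "\<theta> n \<le> 2 * real (k n) * (\<Sum>j\<le>n. real j * p j) / (x * real n * (1/2))"
      unfolding \<theta>_def by (rule frac_le)
    also have "\<dots> = 4 / x * (real (k n) * (\<Sum>j\<le>n. real j * p j) / real n)" by simp
    finally show ?case .
  qed
  have "(\<lambda>n. 4 / x * (real (k n) * (\<Sum>j\<le>n. real j * p j) / real n)) \<longlonglongrightarrow> 4 / x * 0"
    by (intro tendsto_mult tendsto_const k_mean_tendsto_0)
  then have "\<theta> \<longlonglongrightarrow> 0"
    using real_tendsto_sandwich[where f="\<lambda>n. 0", OF _ upper tendsto_const] nonneg by simp
  then show ?thesis unfolding chernoff_rate_def[abs_def] \<theta>_def[symmetric]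
    by (rule tendsto_zero_powrI[OF _ tendsto_const]) (use assms nonneg in auto)
qed

lemma eventually_big_jump_regime:
  assumes x: "0 < x" "x \<le> 1/8"
  obtains C where "\<forall>\<^sub>F n in sequentially. big_jump_regime p n (k n) x C (chernoff_rate x n)"
proof -
  have "x \<le> 1" using x by simp
  obtain N where flat: "\<And>n m. n \<ge> N \<Longrightarrow> real n \<le> 2 * real m \<Longrightarrow> m \<le> n \<Longrightarrow>
      (1 - x) * ell n \<le> ell m \<and> ell m \<le> (1 + x) * ell n"
    by (erule ell_flat[OF x(1) \<open>x \<le> 1\<close>])
  obtain C where "C \<ge> 0" and poly:
      "\<forall>\<^sub>F n in sequentially. \<forall>m. 1 \<le> m \<longrightarrow> m \<le> n \<longrightarrow> p m \<le> C * (real n / real m)^2 * p n"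
    by (erule p_poly_eventually)
  have "\<forall>\<^sub>F n in sequentially. chernoff_rate x n < x / (8 * C + 1)"
    using chernoff_rate_tendsto_0[OF x(1)] \<open>C \<ge> 0\<close> x by (intro order_tendstoD(2)) auto
  then have small: "\<forall>\<^sub>F n in sequentially. (8 * C + 1) * chernoff_rate x n \<le> x"
    by eventually_elim (use \<open>C \<ge> 0\<close> in \<open>simp add: less_divide_eq mult.commute\<close>)
  have "\<forall>\<^sub>F n in sequentially. big_jump_regime p n (k n) x C (chernoff_rate x n)"
    using small poly eventually_n_ell_ge[of 1] eventually_ge_at_top[of "max N 1"]
  proof eventually_elim
    case (elim n)
    then have "n \<ge> 1" "n \<ge> N" by auto
    show ?case
    proof
      have "p n \<noteq> 0" using elim(3) by (auto simp: ell_def)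
      then show "p n > 0" using p_nonneg[of n] by simp
      show "(1 - x) * p n \<le> p m \<and> p m \<le> (1 + x) / (1 - x) * p n"
        if "(1 - x) * real n \<le> real m" "m \<le> n" for m
        using p_flat_if_ell_flat[OF x \<open>n \<ge> 1\<close> flat[OF \<open>n \<ge> N\<close>] that] .
    qed (use elim x \<open>C \<ge> 0\<close> \<open>n \<ge> 1\<close> k_pos p_nonneg in \<open>auto simp: chernoff_rate_def\<close>)
  qed
  then show ?thesis by (rule that)
qed

lemma eventually_bounds:
  assumes "0 < x" "x \<le> 1/8"
  shows "\<forall>\<^sub>F n in sequentially. tv_dist (cond_tau_law p (k n) n) (trunc_law p (k n) n) \<le> 5 * x \<and>
    (\<forall>\<epsilon>\<ge>x. cond_max_dev p (k n) n \<epsilon> \<le> 5 * x)"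
proof -
  obtain C where "\<forall>\<^sub>F n in sequentially. big_jump_regime p n (k n) x C (chernoff_rate x n)"
    by (erule eventually_big_jump_regime[OF assms])
  then show ?thesis
    by (rule eventually_mono) (use big_jump_regime.tv_dist_le big_jump_regime.cond_max_dev_le in blast)
qed

lemma tv_dist_tendsto_0:
  "(\<lambda>n. tv_dist (cond_tau_law p (k n) n) (trunc_law p (k n) n)) \<longlonglongrightarrow> 0"
proof (rule tendsto_zero_if_eventually_le)
  show "tv_dist (cond_tau_law p (k n) n) (trunc_law p (k n) n) \<ge> 0" for n
    unfolding tv_dist_def by (simp add: infsum_nonneg)
  fix e :: real assume "e > 0"
  define x where "x = min (e / 5) (1/8)"
  have "0 < x" "x \<le> 1/8" "5 * x \<le> e" using \<open>e > 0\<close> unfolding x_def by auto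
  from eventually_bounds[OF this(1,2)]
  show "\<forall>\<^sub>F n in sequentially. tv_dist (cond_tau_law p (k n) n) (trunc_law p (k n) n) \<le> e"
    by (rule eventually_mono) (use \<open>5 * x \<le> e\<close> in auto)
qed

lemma cond_max_dev_tendsto_0:
  assumes "\<epsilon> > 0"
  shows "(\<lambda>n. cond_max_dev p (k n) n \<epsilon>) \<longlonglongrightarrow> 0"
proof (rule tendsto_zero_if_eventually_le)
  show "cond_max_dev p (k n) n \<epsilon> \<ge> 0" for n
    unfolding cond_max_dev_def by (intro divide_nonneg_nonneg sum_nonneg list_prob_nonneg p_nonneg)
  fix e :: real assume "e > 0"
  define x where "x = min (min (e / 5) (1/8)) \<epsilon>"
  have "0 < x" "x \<le> 1/8" "5 * x \<le> e" "x \<le> \<epsilon>" using \<open>e > 0\<close> assms unfolding x_def by auto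
  from eventually_bounds[OF this(1,2)]
  show "\<forall>\<^sub>F n in sequentially. cond_max_dev p (k n) n \<epsilon> \<le> e"
    by (rule eventually_mono) (use \<open>5 * x \<le> e\<close> \<open>x \<le> \<epsilon>\<close> in force)
qed

end

theorem theorem2p3:
  fixes w :: "nat \<Rightarrow> real" and \<rho> :: real and L :: "real \<Rightarrow> real" and k :: "nat \<Rightarrow> nat"
  assumes w_nonneg: "\<forall>n. w n \<ge> 0"
    and rho_pos: "\<rho> > 0"
    and L_sv: "slowly_varying L"
    and w_asymp: "w \<sim>[at_top] (\<lambda>n. L (real n) * inverse (real n) * inverse \<rho> ^ n)"
    and W_fin: "summable (\<lambda>n. w n * \<rho> ^ n)"
    and W_pos: "(\<Sum>n. w n * \<rho> ^ n) > 0"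
    and k_pos: "\<forall>n\<ge>1. k n \<ge> 1"
    and kL: "((\<lambda>n. real (k n) * L (real n)) \<longlongrightarrow> 0) sequentially"
  shows "((\<lambda>n. tv_dist (cond_tau_law (step_prob w \<rho>) (k n) n)
                        (trunc_law (step_prob w \<rho>) (k n) n)) \<longlongrightarrow> 0) sequentially
         \<and> (\<forall>\<epsilon>>0. ((\<lambda>n. cond_max_dev (step_prob w \<rho>) (k n) n \<epsilon>) \<longlongrightarrow> 0) sequentially)"
proof -
  interpret slowly_varying_weights w \<rho> L k
    using assms by unfold_locales
  show ?thesis
    using tv_dist_tendsto_0 cond_max_dev_tendsto_0 unfolding p_def by blast
qed

end
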